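(* Let $q'\ge2$ be an integer. For every finite field $F$, the network $\mathcal{N}_2$ (with parameter $q'$) has a $2$-dimensional VLNC solution over $F$ if and only if the characteristic of $F$ divides $q'$.
   Context: Vector linear network coding: each source $v$ generates $x_v\in F^d$; an edge out of a source $v$ carries $Ax_v$ for a $d\times d$ matrix $A$ over $F$; an edge out of an intermediate node carries $\sum A_{e',e}y_{e'}$ over the edges $e'$ entering that node; a terminal computes vectors $\sum B_ey_e$ over its incoming edges; a $d$-dimensional VLNC solution over $F$ is such a code with which every terminal computes each demanded message for all message choices. The Char-$q$-$s$ network (integer $q\ge2$): sources $s,x_1,\dots,x_{q+2}$; intermediate nodes $m_1,\dots,m_{q+3},n_1,\dots,n_{q+3}$; terminals $r_1,\dots,r_{q+3}$; edges: $(x_1,m_i)$ for $1\le i\le q+1$; $(s,m_1)$ and $(s,m_i)$ for $4\le i\le q+3$; $(x_i,m_j)$ for $2\le i,j\le q+2$, $i\ne j$; $(x_i,m_{q+3})$ for $1\le i\le q+2$; $e_i=(m_i,n_i)$ for $1\le i\le q+3$; $(n_i,r_i)$ for $1\le i\le q+2$; $(n_{q+3},r_i)$ and $(n_i,r_{q+3})$ for $1\le i\le q+2$; $(x_i,r_1)$ for $2\le i\le q+1$; $(x_1,r_{q+2})$; $(s,r_2)$; $(s,r_3)$. Demands: $r_1$ demands $x_{q+2}$; $r_i$ demands $x_i$ for $2\le i\le q+2$; $r_{q+3}$ demands $x_1$; no terminal demands $s$. The generalized M-network $\mathcal{M}_3$: sources in three groups $G_1=(\bar a,\bar b,\bar c)$,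 $G_2=(\bar r,\bar s,\bar w)$, $G_3=(\bar x,\bar y,\bar z)$; intermediate nodes $\bar u_1,\bar u_2,\bar u_3,\bar v_1,\dots,\bar v_5$; edges from each source of $G_i$ to $\bar u_i$, edges $(\bar u_i,\bar v_i),(\bar u_i,\bar v_4),(\bar u_i,\bar v_5)$ for $i=1,2,3$, and $(\bar v_i,\bar t_j)$ for $1\le i\le5$, $1\le j\le27$; terminals $\bar t_1,\dots,\bar t_{27}$, where $\bar t_j$ demands the $j$-th triple in the lexicographic order of $G_1\times G_2\times G_3$ (e.g. $\bar t_1$: $\bar a,\bar r,\bar x$; $\bar t_2$: $\bar a,\bar r,\bar y$; $\bar t_4$: $\bar a,\bar s,\bar x$; $\bar t_{25}$: $\bar c,\bar w,\bar x$; $\bar t_{27}$: $\bar c,\bar w,\bar z$). The network $\mathcal{N}_2$ (integer $q'\ge2$) is obtained from the disjoint union of $\mathcal{M}_3$ and a copy of the Char-$q'$-$s$ network (nodes renamed $\bar m_i,\bar n_i$, terminals $\rho_i$, edges $\bar e_i=(\bar m_i,\bar n_i)$, sources $x_i$ renamed $\bar x_i$ for $2\le i\le q'+2$) by identifying $x_1$ with $\bar a$ and $s$ with $\bar x$ (so $\rho_{q'+3}$ demands $\bar a$), and adding the edges: $(\bar w,\bar t_j)$ for $j\in\{7,8,9,16,17,18\}$; $(\bar c,\bar t_j)$ for $19\le j\le24$; $(\bar a,\bar t_{25})$; $(\bar y,\bar t_{26})$; $(\bar n_1,\bar t_{25})$. All other demands are unchanged. *)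

theory Defs
  imports "HOL-Analysis.Finite_Cartesian_Product"
begin

text \<open>A network is given by its set of source nodes, its set of (directed) edges,
  each edge being a pair (tail, head), and its demand function: the set of
  sources demanded by each node (empty for non-terminals).\<close>

record 'v network =
  srcs :: "'v set"
  edges :: "('v \<times> 'v) set"
  demands :: "'v \<Rightarrow> 'v set"

definition in_edges :: "'v network \<Rightarrow> 'v \<Rightarrow> ('v \<times> 'v) set" where
  "in_edges N v = {e \<in> edges N. snd e = v}"

definition vlnc_edge_values ::
  "'v network \<Rightarrow> ('v \<times> 'v \<Rightarrow> 'a::field^'d^'d) \<Rightarrow> ('v \<times> 'v \<Rightarrow> 'v \<times> 'v \<Rightarrow> 'a^'d^'d)
   \<Rightarrow> ('v \<Rightarrow> 'a^'d) \<Rightarrow> ('v \<times> 'v \<Rightarrow> 'a^'d) \<Rightarrow> bool" where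
  "vlnc_edge_values N A K x y \<longleftrightarrow>
     (\<forall>e \<in> edges N.
        (fst e \<in> srcs N \<longrightarrow> y e = A e *v x (fst e)) \<and>
        (fst e \<notin> srcs N \<longrightarrow> y e = (\<Sum>e'\<in>in_edges N (fst e). K e' e *v y e')))"

text \<open>In an acyclic network the edge values are uniquely
  determined by x, A and K.\<close>

definition is_vlnc_solution ::
  "'v network \<Rightarrow> ('v \<times> 'v \<Rightarrow> 'a::field^'d^'d) \<Rightarrow> ('v \<times> 'v \<Rightarrow> 'v \<times> 'v \<Rightarrow> 'a^'d^'d)
   \<Rightarrow> ('v \<Rightarrow> 'v \<Rightarrow> 'v \<times> 'v \<Rightarrow> 'a^'d^'d) \<Rightarrow> bool" where
  "is_vlnc_solution N A K B \<longleftrightarrow>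
     (\<forall>x y. vlnc_edge_values N A K x y \<longrightarrow>
        (\<forall>t. \<forall>s \<in> demands N t.
            (\<Sum>e\<in>in_edges N t. B t s e *v y e) = x s))"

text \<open>Nodes: the nine sources of M_3 (a,b,c | r,s,w | x,y,z, all barred), the
  sources XB i (= renamed x_i, 2 \<le> i \<le> q'+2) of the Char-q'-s copy, whose x_1 is
  identified with a-bar and s with x-bar; intermediate nodes Mn i, Nn i (the
  barred m_i, n_i), Ub i, Vn i; terminals Rho i and Tn j.\<close>

datatype node = SA | SB | SC | SR | SS | SW | SX | SY | SZ | XB nat
  | Mn nat | Nn nat | Rho nat | Ub nat | Vn nat | Tn nat

definition N2_srcs :: "nat \<Rightarrow> node set" where
  "N2_srcs q = {SA, SB, SC, SR, SS, SW, SX, SY, SZ} \<union> {XB i | i. 2 \<le> i \<and> i \<le> q + 2}"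

definition char_edges :: "nat \<Rightarrow> (node \<times> node) set" where
  "char_edges q =
     {(SA, Mn i) | i. 1 \<le> i \<and> i \<le> q + 1}
   \<union> {(SX, Mn 1)} \<union> {(SX, Mn i) | i. 4 \<le> i \<and> i \<le> q + 3}
   \<union> {(XB i, Mn j) | i j. 2 \<le> i \<and> i \<le> q + 2 \<and> 2 \<le> j \<and> j \<le> q + 2 \<and> i \<noteq> j}
   \<union> {(SA, Mn (q + 3))} \<union> {(XB i, Mn (q + 3)) | i. 2 \<le> i \<and> i \<le> q + 2}
   \<union> {(Mn i, Nn i) | i. 1 \<le> i \<and> i \<le> q + 3}
   \<union> {(Nn i, Rho i) | i. 1 \<le> i \<and> i \<le> q + 2}
   \<union> {(Nn (q + 3), Rho i) | i. 1 \<le> i \<and> i \<le> q + 2}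
   \<union> {(Nn i, Rho (q + 3)) | i. 1 \<le> i \<and> i \<le> q + 2}
   \<union> {(XB i, Rho 1) | i. 2 \<le> i \<and> i \<le> q + 1}
   \<union> {(SA, Rho (q + 2))}
   \<union> {(SX, Rho 2), (SX, Rho 3)}"

definition G1 :: "node list" where "G1 = [SA, SB, SC]"
definition G2 :: "node list" where "G2 = [SR, SS, SW]"
definition G3 :: "node list" where "G3 = [SX, SY, SZ]"

definition M3_edges :: "(node \<times> node) set" where
  "M3_edges =
     {(v, Ub 1) | v. v \<in> set G1} \<union> {(v, Ub 2) | v. v \<in> set G2} \<union> {(v, Ub 3) | v. v \<in> set G3}
   \<union> {(Ub i, Vn i) | i. 1 \<le> i \<and> i \<le> 3}
   \<union> {(Ub i, Vn 4) | i. 1 \<le> i \<and> i \<le> 3}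
   \<union> {(Ub i, Vn 5) | i. 1 \<le> i \<and> i \<le> 3}
   \<union> {(Vn i, Tn j) | i j. 1 \<le> i \<and> i \<le> 5 \<and> 1 \<le> j \<and> j \<le> 27}"

definition extra_edges :: "(node \<times> node) set" where
  "extra_edges =
     {(SW, Tn j) | j. j \<in> {7, 8, 9, 16, 17, 18}}
   \<union> {(SC, Tn j) | j. 19 \<le> j \<and> j \<le> 24}
   \<union> {(SA, Tn 25), (SY, Tn 26), (Nn 1, Tn 25)}"

text \<open>Tn j (1 \<le> j \<le> 27) demands the j-th triple in lexicographic order of
  G1 \<times> G2 \<times> G3.\<close>

definition N2_demands :: "nat \<Rightarrow> node \<Rightarrow> node set" where
  "N2_demands q v = (case v of
      Rho i \<Rightarrow> (if i = 1 then {XB (q + 2)}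
                else if 2 \<le> i \<and> i \<le> q + 2 then {XB i}
                else if i = q + 3 then {SA} else {})
    | Tn j \<Rightarrow> (if 1 \<le> j \<and> j \<le> 27 then
                 {G1 ! ((j - 1) div 9), G2 ! (((j - 1) div 3) mod 3), G3 ! ((j - 1) mod 3)}
               else {})
    | _ \<Rightarrow> {})"

definition N2 :: "nat \<Rightarrow> node network" where
  "N2 q = \<lparr> srcs = N2_srcs q, edges = char_edges q \<union> M3_edges \<union> extra_edges,
            demands = N2_demands q \<rparr>"

end

theory Submission
  imports Defs "HOL-Analysis.Cartesian_Space"
begin

text \<open>Suppose first that the characteristic of F does not divide q'.  At the terminals
  Rho 2, ..., Rho (q'+2) of the Char-q'-s copy each x_i is decoded from e_i and e_(q'+3); this
  forces the transfer matrices into the edges e_i to factor through a common right-invertible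
  map, and since q' is invertible in F the decoding of a at Rho (q'+3) then uses e_1 alone.  Hence
  e_1 carries no information about x (the identified source s).  In M_3, with messages in F^2,
  the kernel of the edge from each group node Ub i to its private node Vn i has dimension at least
  4, and its projections to the three sources of the group have dimensions at most 2.  Every
  terminal without extra in-edges decodes its three demands from the two edges leaving Vn 4 and
  Vn 5, so the corresponding three dimensions add up to at most 4; this forces the projections to
  w and x to be all of F^2 and the projection to b to have dimension at most 1.  Terminal Tn 25,
  whose extra edges from a and e_1 now vanish on messages with a = 0, forces c = 0 whenever a = 0
  in the kernel of group 1, and then the projection to b must be all of F^2: a contradiction.

  Conversely, if the characteristic divides q', letting every edge of the Char-q'-s copy carry
  the sum of its inputs makes e_1 + ... + e_(q'+2) = (q'+1) a + q' s + q' (x_2 + ... + x_(q'+2))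
  equal to a, and an explicit code for M_3 uses the extra edges for the remaining demands.\<close>

section \<open>Networks with three layers\<close>

definition source_values :: "('v \<times> 'v \<Rightarrow> 'a::field^'d^'d) \<Rightarrow> ('v \<Rightarrow> 'a^'d) \<Rightarrow> 'v \<times> 'v \<Rightarrow> 'a^'d" where
  "source_values A x e = A e *v x (fst e)"

definition forward_values ::
  "'v network \<Rightarrow> ('v \<times> 'v \<Rightarrow> 'v \<times> 'v \<Rightarrow> 'a::field^'d^'d) \<Rightarrow> ('v \<times> 'v \<Rightarrow> 'a^'d) \<Rightarrow> 'v \<times> 'v \<Rightarrow> 'a^'d" where
  "forward_values N K y e = (\<Sum>e'\<in>in_edges N (fst e). K e' e *v y e')"

definition layered_values ::
  "'v network \<Rightarrow> ('v \<Rightarrow> bool) \<Rightarrow> ('v \<times> 'v \<Rightarrow> 'a::field^'d^'d) \<Rightarrow> ('v \<times> 'v \<Rightarrow> 'v \<times> 'v \<Rightarrow> 'a^'d^'d)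
   \<Rightarrow> ('v \<Rightarrow> 'a^'d) \<Rightarrow> 'v \<times> 'v \<Rightarrow> 'a^'d" where
  "layered_values N L1 A K x e =
     (if fst e \<in> srcs N then source_values A x e
      else if L1 (fst e) then forward_values N K (source_values A x) e
      else forward_values N K (forward_values N K (source_values A x)) e)"

text \<open>Every edge leaves a source, a node of the first layer (fed only by sources) or a node
  of the second layer (fed only by the first layer), so the edge values are determined by the
  messages.\<close>

locale three_layer_network =
  fixes N :: "'v network" and L1 L2 :: "'v \<Rightarrow> bool"
  assumes tail_cases: "e \<in> edges N \<Longrightarrow> fst e \<in> srcs N \<or> L1 (fst e) \<or> L2 (fst e)"
    and into_L1: "e \<in> edges N \<Longrightarrow> L1 (snd e) \<Longrightarrow> fst e \<in> srcs N"
    and into_L2: "e \<in> edges N \<Longrightarrow> L2 (snd e) \<Longrightarrow> L1 (fst e)"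
    and L1_not_src: "L1 v \<Longrightarrow> v \<notin> srcs N"
    and L2_not_src: "L2 v \<Longrightarrow> v \<notin> srcs N"
    and L1_not_L2: "L1 v \<Longrightarrow> \<not> L2 v"
begin

lemma layered_values_at_src: "fst e \<in> srcs N \<Longrightarrow> layered_values N L1 A K x e = A e *v x (fst e)"
  by (simp add: layered_values_def source_values_def)

lemma layered_values_at_L1:
  "L1 (fst e) \<Longrightarrow>
     layered_values N L1 A K x e = (\<Sum>e'\<in>in_edges N (fst e). K e' e *v (A e' *v x (fst e')))"
  using L1_not_src by (simp add: layered_values_def forward_values_def source_values_def)

lemma layered_values_at_L2:
  assumes "L2 (fst e)"
  shows "layered_values N L1 A K x e =
           (\<Sum>e'\<in>in_edges N (fst e). K e' e *v layered_values N L1 A K x e')"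
proof -
  have "layered_values N L1 A K x e' = forward_values N K (source_values A x) e'"
    if "e' \<in> in_edges N (fst e)" for e'
    using that assms into_L2[of e'] L1_not_src by (simp add: in_edges_def layered_values_def)
  then show ?thesis
    using assms L2_not_src L1_not_L2
    by (auto simp: layered_values_def forward_values_def[of N K "forward_values N K _"]
        intro!: sum.cong)
qed

lemma layered_values_edge_values: "vlnc_edge_values N A K x (layered_values N L1 A K x)"
  unfolding vlnc_edge_values_def
proof (intro ballI conjI impI)
  fix e assume e: "e \<in> edges N"
  show "fst e \<in> srcs N \<Longrightarrow> layered_values N L1 A K x e = A e *v x (fst e)"
    by (rule layered_values_at_src)
  assume ns: "fst e \<notin> srcs N"
  consider "L1 (fst e)" | "L2 (fst e)" using tail_cases[OF e] ns by blast
  then show "layered_values N L1 A K x e =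
      (\<Sum>e'\<in>in_edges N (fst e). K e' e *v layered_values N L1 A K x e')"
  proof cases
    case 1
    then show ?thesis
      using into_L1
      by (auto simp: layered_values_at_L1 layered_values_at_src in_edges_def intro!: sum.cong)
  next
    case 2
    then show ?thesis by (rule layered_values_at_L2)
  qed
qed

lemma edge_values_eq_layered_values:
  assumes y: "vlnc_edge_values N A K x y" and e: "e \<in> edges N"
  shows "y e = layered_values N L1 A K x e"
proof -
  have y_src: "y e = A e *v x (fst e)" if "e \<in> edges N" "fst e \<in> srcs N" for e
    using y that by (simp add: vlnc_edge_values_def)
  have y_fwd: "y e = (\<Sum>e'\<in>in_edges N (fst e). K e' e *v y e')"
    if "e \<in> edges N" "fst e \<notin> srcs N" for e
    using y that by (simp add: vlnc_edge_values_def)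
  have y_L1: "y e = layered_values N L1 A K x e" if "e \<in> edges N" "L1 (fst e)" for e
  proof -
    have "y e = (\<Sum>e'\<in>in_edges N (fst e). K e' e *v y e')"
      using that L1_not_src y_fwd by blast
    also have "\<dots> = layered_values N L1 A K x e"
      unfolding layered_values_at_L1[OF that(2)] using that into_L1 y_src
      by (intro sum.cong) (auto simp: in_edges_def)
    finally show ?thesis .
  qed
  have y_L2: "y e = layered_values N L1 A K x e" if "e \<in> edges N" "L2 (fst e)" for e
  proof -
    have "y e = (\<Sum>e'\<in>in_edges N (fst e). K e' e *v y e')"
      using that L2_not_src y_fwd by blast
    also have "\<dots> = layered_values N L1 A K x e"
      unfolding layered_values_at_L2[OF that(2)] using that into_L2 y_L1
      by (intro sum.cong) (auto simp: in_edges_def)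
    finally show ?thesis .
  qed
  show ?thesis
    using tail_cases[OF e] y_src[OF e] y_L1[OF e] y_L2[OF e]
    by (auto simp: layered_values_at_src)
qed

lemma is_vlnc_solution_iff:
  "is_vlnc_solution N A K B \<longleftrightarrow>
     (\<forall>x t. \<forall>s\<in>demands N t. (\<Sum>e\<in>in_edges N t. B t s e *v layered_values N L1 A K x e) = x s)"
proof -
  have "(\<Sum>e\<in>in_edges N t. B t s e *v y e) = (\<Sum>e\<in>in_edges N t. B t s e *v layered_values N L1 A K x e)"
    if "vlnc_edge_values N A K x y" for x y t s
    using edge_values_eq_layered_values[OF that] by (auto simp: in_edges_def intro!: sum.cong)
  then show ?thesis
    unfolding is_vlnc_solution_def using layered_values_edge_values by fastforce
qed

end

section \<open>Incidence structure of the network N_2\<close>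

lemma finite_edges_N2: "finite (edges (N2 q))"
proof -
  have "{(XB i, Mn j) | i j. 2 \<le> i \<and> i \<le> q + 2 \<and> 2 \<le> j \<and> j \<le> q + 2 \<and> i \<noteq> j}
      \<subseteq> (\<lambda>(i,j). (XB i, Mn j)) ` ({2..q+2} \<times> {2..q+2})"
   and "{(Vn i, Tn j) | i j. 1 \<le> i \<and> i \<le> 5 \<and> 1 \<le> j \<and> j \<le> (27::nat)}
      \<subseteq> (\<lambda>(i,j). (Vn i, Tn j)) ` ({1..5} \<times> {1..27})" by auto
  note this[THEN finite_subset]
  then show ?thesis
    unfolding N2_def char_edges_def M3_edges_def extra_edges_def G1_def G2_def G3_def
    by auto
qed

lemma finite_in_edges_N2: "finite (in_edges (N2 q) v)"
  unfolding in_edges_def using finite_edges_N2 by auto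

definition layer1 :: "node \<Rightarrow> bool" where
  "layer1 v = (case v of Ub _ \<Rightarrow> True | Mn _ \<Rightarrow> True | _ \<Rightarrow> False)"

definition layer2 :: "node \<Rightarrow> bool" where
  "layer2 v = (case v of Vn _ \<Rightarrow> True | Nn _ \<Rightarrow> True | _ \<Rightarrow> False)"

lemma N2_tail_cases:
  "e \<in> edges (N2 q) \<Longrightarrow> fst e \<in> srcs (N2 q) \<or> layer1 (fst e) \<or> layer2 (fst e)"
  unfolding N2_def char_edges_def M3_edges_def extra_edges_def G1_def G2_def G3_def
    N2_srcs_def layer1_def layer2_def
  by auto

lemma N2_into_layer1: "e \<in> edges (N2 q) \<Longrightarrow> layer1 (snd e) \<Longrightarrow> fst e \<in> srcs (N2 q)"
  unfolding N2_def char_edges_def M3_edges_def extra_edges_def G1_def G2_def G3_def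
    N2_srcs_def layer1_def
  by auto

lemma N2_into_layer2: "e \<in> edges (N2 q) \<Longrightarrow> layer2 (snd e) \<Longrightarrow> layer1 (fst e)"
  unfolding N2_def char_edges_def M3_edges_def extra_edges_def G1_def G2_def G3_def
    N2_srcs_def layer1_def layer2_def
  by auto

interpretation N2: three_layer_network "N2 q" layer1 layer2 for q
  by unfold_locales
    (use N2_tail_cases N2_into_layer1 N2_into_layer2 in
      \<open>auto simp: N2_def N2_srcs_def layer1_def layer2_def split: node.splits\<close>)

abbreviation N2_values where "N2_values q \<equiv> layered_values (N2 q) layer1"

lemma in_edges_pair: "in_edges N v = {(a, v) | a. (a, v) \<in> edges N}"
  unfolding in_edges_def by auto

lemma mem_edges_Mn: "(a, Mn k) \<in> edges (N2 q) \<longleftrightarrow>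
   (a = SA \<and> ((1 \<le> k \<and> k \<le> q+1) \<or> k = q+3)) \<or> (a = SX \<and> (k = 1 \<or> (4 \<le> k \<and> k \<le> q+3)))
   \<or> (\<exists>i. a = XB i \<and> 2 \<le> i \<and> i \<le> q+2 \<and> ((2 \<le> k \<and> k \<le> q+2 \<and> i \<noteq> k) \<or> k = q+3))"
  unfolding N2_def char_edges_def M3_edges_def extra_edges_def G1_def G2_def G3_def by simp blast

lemma mem_edges_Nn: "(a, Nn k) \<in> edges (N2 q) \<longleftrightarrow> a = Mn k \<and> 1 \<le> k \<and> k \<le> q + 3"
  unfolding N2_def char_edges_def M3_edges_def extra_edges_def G1_def G2_def G3_def by simp

lemma mem_edges_Rho: "(a, Rho i) \<in> edges (N2 q) \<longleftrightarrow>
   ((a = Nn i \<or> a = Nn (q+3)) \<and> 1 \<le> i \<and> i \<le> q+2) \<or> (i = q+3 \<and> (\<exists>k. a = Nn k \<and> 1 \<le> k \<and> k \<le> q+2))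
   \<or> (i = 1 \<and> (\<exists>k. a = XB k \<and> 2 \<le> k \<and> k \<le> q+1)) \<or> (a = SA \<and> i = q+2) \<or> (a = SX \<and> (i = 2 \<or> i = 3))"
  unfolding N2_def char_edges_def M3_edges_def extra_edges_def by simp blast

lemma mem_edges_Ub: "(a, Ub i) \<in> edges (N2 q) \<longleftrightarrow>
   (i = 1 \<and> (a = SA \<or> a = SB \<or> a = SC)) \<or> (i = 2 \<and> (a = SR \<or> a = SS \<or> a = SW))
   \<or> (i = 3 \<and> (a = SX \<or> a = SY \<or> a = SZ))"
  unfolding N2_def char_edges_def M3_edges_def extra_edges_def G1_def G2_def G3_def by auto

lemma mem_edges_Vn: "(a, Vn i) \<in> edges (N2 q) \<longleftrightarrow>
   (\<exists>k. a = Ub k \<and> 1 \<le> k \<and> k \<le> 3 \<and> (k = i \<or> i = 4 \<or> i = 5))"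
  unfolding N2_def char_edges_def M3_edges_def extra_edges_def G1_def G2_def G3_def by auto

lemma mem_edges_Tn: "(a, Tn j) \<in> edges (N2 q) \<longleftrightarrow>
   ((\<exists>i. a = Vn i \<and> 1 \<le> i \<and> i \<le> 5) \<and> 1 \<le> j \<and> j \<le> 27) \<or> (a = SW \<and> j \<in> {7,8,9,16,17,18})
   \<or> (a = SC \<and> 19 \<le> j \<and> j \<le> 24) \<or> (a = SA \<and> j = 25) \<or> (a = SY \<and> j = 26) \<or> (a = Nn 1 \<and> j = 25)"
  unfolding N2_def char_edges_def M3_edges_def extra_edges_def G1_def G2_def G3_def by auto

lemma in_edges_Nn: "1 \<le> k \<Longrightarrow> k \<le> q + 3 \<Longrightarrow> in_edges (N2 q) (Nn k) = {(Mn k, Nn k)}"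
  unfolding in_edges_pair mem_edges_Nn by auto

lemma in_edges_Rho_1:
  "in_edges (N2 q) (Rho 1) = {(Nn 1, Rho 1), (Nn (q+3), Rho 1)} \<union> (\<lambda>i. (XB i, Rho 1)) ` {2..q+1}"
  unfolding in_edges_pair mem_edges_Rho by auto

lemma in_edges_Rho_mid: "2 \<le> i \<Longrightarrow> i \<le> q + 1 \<Longrightarrow>
   in_edges (N2 q) (Rho i) = {(Nn i, Rho i), (Nn (q+3), Rho i)} \<union> (if i \<le> 3 then {(SX, Rho i)} else {})"
  unfolding in_edges_pair mem_edges_Rho by auto

lemma in_edges_Rho_last: "2 \<le> q \<Longrightarrow>
   in_edges (N2 q) (Rho (q+2)) = {(Nn (q+2), Rho (q+2)), (Nn (q+3), Rho (q+2))} \<union> {(SA, Rho (q+2))}"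
  unfolding in_edges_pair mem_edges_Rho by auto

lemma in_edges_Rho_a: "2 \<le> q \<Longrightarrow> in_edges (N2 q) (Rho (q+3)) = (\<lambda>k. (Nn k, Rho (q+3))) ` {1..q+2}"
  unfolding in_edges_pair mem_edges_Rho by auto

lemma in_edges_Vn: "i \<in> {1,2,3} \<Longrightarrow> in_edges (N2 q) (Vn i) = {(Ub i, Vn i)}"
  unfolding in_edges_pair mem_edges_Vn by auto

lemma in_edges_Vn_shared: "l \<in> {4,5} \<Longrightarrow>
    in_edges (N2 q) (Vn l) = {(Ub 1, Vn l), (Ub 2, Vn l), (Ub 3, Vn l)}"
  unfolding in_edges_pair mem_edges_Vn by auto

lemma demands_Rho:
  "demands (N2 q) (Rho 1) = {XB (q+2)}"
  "2 \<le> i \<Longrightarrow> i \<le> q+2 \<Longrightarrow> demands (N2 q) (Rho i) = {XB i}"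
  "demands (N2 q) (Rho (q+3)) = {SA}"
  "demands (N2 q) (Rho i) \<noteq> {} \<Longrightarrow> i = 1 \<or> (2 \<le> i \<and> i \<le> q + 2) \<or> i = q + 3"
  by (auto simp: N2_def N2_demands_def split: if_splits)

lemma srcs_N2:
  "SA \<in> srcs (N2 q)" "SB \<in> srcs (N2 q)" "SC \<in> srcs (N2 q)" "SR \<in> srcs (N2 q)"
  "SS \<in> srcs (N2 q)" "SW \<in> srcs (N2 q)" "SX \<in> srcs (N2 q)" "SY \<in> srcs (N2 q)" "SZ \<in> srcs (N2 q)"
  "2 \<le> i \<Longrightarrow> i \<le> q + 2 \<Longrightarrow> XB i \<in> srcs (N2 q)"
  by (auto simp: N2_def N2_srcs_def)

lemma layer_simps: "layer1 (Mn k)" "layer1 (Ub k)" "layer2 (Nn k)" "layer2 (Vn k)"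
  by (simp_all add: layer1_def layer2_def)

lemma N2_values_Nn: "1 \<le> k \<Longrightarrow> k \<le> q + 3 \<Longrightarrow>
    N2_values q A K x (Nn k, h) = K (Mn k, Nn k) (Nn k, h) *v N2_values q A K x (Mn k, Nn k)"
  by (simp add: N2.layered_values_at_L2 layer_simps in_edges_Nn)

lemma N2_values_Vn: "i \<in> {1,2,3} \<Longrightarrow>
    N2_values q A K x (Vn i, h) = K (Ub i, Vn i) (Vn i, h) *v N2_values q A K x (Ub i, Vn i)"
  by (simp add: N2.layered_values_at_L2 layer_simps in_edges_Vn)

section \<open>The linear algebra behind the Char-q-s network\<close>

lemma matrix_add_rdistrib: "((A::'a::semiring_1^'n^'m) + B) ** C = A ** C + B ** C"
  by (vector matrix_matrix_mult_def sum.distrib[symmetric] field_simps)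

lemma matrix_sum_mult: "finite S \<Longrightarrow> (\<Sum>k\<in>S. X k :: 'a::semiring_1^'n^'m) ** C = (\<Sum>k\<in>S. X k ** C)"
  by (induction S rule: finite_induct) (auto simp: matrix_add_rdistrib)

lemma matrix_sum_mult_vector:
  "finite S \<Longrightarrow> (\<Sum>k\<in>S. X k :: 'a::semiring_1^'n^'m) *v v = (\<Sum>k\<in>S. X k *v v)"
  by (induction S rule: finite_induct) (auto simp: matrix_vector_mult_add_rdistrib)

lemma matrix_neg_mult: "(- (A::'a::ring_1^'n^'m)) ** B = - (A ** B)"
  by (vector matrix_matrix_mult_def sum_negf)

lemma matrix_mult_neg: "(A::'a::ring_1^'n^'m) ** (- B) = - (A ** B)"
  by (vector matrix_matrix_mult_def sum_negf)

lemma matrix_neg_mult_vector [simp]: "(- (M::'a::ring_1^'n^'m)) *v v = - (M *v v)"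
  by (simp add: vec_eq_iff matrix_vector_mult_def sum_negf)

lemma matrix_inverse_commute: "(B::'a::field^'n^'n) ** A = mat 1 \<Longrightarrow> A ** B = mat 1"
  using matrix_left_right_inverse by blast

lemma eq_zero_if_cosums_zero:
  fixes Z :: "'i \<Rightarrow> 'a::field^'n^'m"
  assumes fin: "finite I" and char: "of_nat (card I - 1) \<noteq> (0::'a)"
    and cosums: "\<And>j. j \<in> I \<Longrightarrow> (\<Sum>k\<in>I - {j}. Z k) = 0" and j: "j \<in> I"
  shows "Z j = 0"
proof -
  define T where "T = (\<Sum>k\<in>I. Z k)"
  have Z_eq: "Z k = T" if "k \<in> I" for k
    using sum.remove[OF fin that, of Z] cosums[OF that] unfolding T_def by simp
  have "(\<Sum>k\<in>I - {j}. Z k) = (\<Sum>k\<in>I - {j}. T)" by (rule sum.cong) (auto simp: Z_eq)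
  then have "(\<Sum>k\<in>I - {j}. T) $ a $ b = 0" for a b using cosums[OF j] by simp
  then have "(\<Sum>k\<in>I - {j}. T $ a $ b) = 0" for a b by (simp only: sum_component)
  then have "of_nat (card I - 1) * T $ a $ b = 0" for a b
    using fin j by (simp add: card_Diff_singleton)
  then have "T = 0" using char by (simp add: vec_eq_iff)
  then show ?thesis using Z_eq[OF j] by simp
qed

lemma right_inverse_from_decoders:
  fixes U V V' M N N' :: "'a::field^'n^'n"
  assumes "V ** N = mat 1" "V' ** N' = mat 1" "U ** M + V ** N' = 0"
  shows "U ** (M ** (- (V' ** N))) = mat 1"
proof -
  have "U ** M = - (V ** N')" using assms(3) by (simp add: eq_neg_iff_add_eq_0)
  then have "U ** (M ** (- (V' ** N))) = (V ** N') ** (V' ** N)"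
    by (simp add: matrix_mul_assoc matrix_mult_neg matrix_neg_mult)
  also have "\<dots> = V ** ((N' ** V') ** N)" by (simp add: matrix_mul_assoc)
  also have "\<dots> = mat 1" using assms(1) matrix_inverse_commute[OF assms(2)] by simp
  finally show ?thesis .
qed

text \<open>The identities for i = j give V i ** N i = 1, and with a second index they make U i
  invertible; hence M i j = - R i ** N j for i \<noteq> j, where R i = U i^-1 ** V i is right
  invertible.  A combination of the M k j vanishing for every j thus makes every cosum of the
  W k ** R k vanish.\<close>

lemma decoders_vanish:
  fixes M :: "'i \<Rightarrow> 'i \<Rightarrow> 'a::field^'n^'n" and N U V W :: "'i \<Rightarrow> 'a^'n^'n"
  assumes fin: "finite I" and two: "2 \<le> card I" and char: "of_nat (card I - 1) \<noteq> (0::'a)"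
    and dec: "\<And>i j. i \<in> I \<Longrightarrow> j \<in> I \<Longrightarrow> U i ** M i j + V i ** N j = (if i = j then mat 1 else 0)"
    and diag: "\<And>i. i \<in> I \<Longrightarrow> M i i = 0"
    and comb: "\<And>j. j \<in> I \<Longrightarrow> (\<Sum>k\<in>I. W k ** M k j) = 0"
    and k: "k \<in> I"
  shows "W k = 0"
proof -
  have VN: "V i ** N i = mat 1" if "i \<in> I" for i
    using dec[OF that that] diag[OF that] by simp
  have NV: "N i ** V i = mat 1" if "i \<in> I" for i
    using VN[OF that] matrix_inverse_commute by blast
  have UM: "U i ** M i j = - (V i ** N j)" if "i \<in> I" "j \<in> I" "i \<noteq> j" for i j
    using dec[OF that(1,2)] that(3) by (simp add: eq_neg_iff_add_eq_0)
  have "\<exists>R. U i ** R = mat 1" if i: "i \<in> I" for i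
  proof -
    have "card (I - {i}) \<noteq> 0" using two fin i by (simp add: card_Diff_singleton)
    then have "I - {i} \<noteq> {}" by (metis card.empty)
    then obtain j where j: "j \<in> I" "j \<noteq> i" by blast
    show ?thesis
      using right_inverse_from_decoders[OF VN[OF i] VN[OF j(1)]] dec[OF i j(1)] j(2) by auto
  qed
  then obtain Ui where "\<forall>i\<in>I. U i ** Ui i = mat 1" by (metis bchoice)
  then have UiU: "Ui i ** U i = mat 1" if "i \<in> I" for i
    using that matrix_inverse_commute by blast
  have M_eq: "M i j = - (Ui i ** V i ** N j)" if "i \<in> I" "j \<in> I" "i \<noteq> j" for i j
  proof -
    have "M i j = Ui i ** (U i ** M i j)" using UiU[OF that(1)] by (simp add: matrix_mul_assoc)
    then show ?thesis using UM[OF that] by (simp add: matrix_mult_neg matrix_mul_assoc)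
  qed
  define Z where "Z k = W k ** Ui k ** V k" for k
  have "(\<Sum>k\<in>I - {j}. Z k) = 0" if j: "j \<in> I" for j
  proof -
    have "0 = (\<Sum>k\<in>I - {j}. W k ** M k j)"
      using comb[OF j] sum.remove[OF fin j, of "\<lambda>k. W k ** M k j"] diag[OF j] by simp
    also have "\<dots> = (\<Sum>k\<in>I - {j}. - (Z k ** N j))"
      using M_eq j by (intro sum.cong) (auto simp: Z_def matrix_mult_neg matrix_mul_assoc)
    also have "\<dots> = - ((\<Sum>k\<in>I - {j}. Z k) ** N j)"
      using fin by (simp add: matrix_sum_mult sum_negf)
    finally have "(\<Sum>k\<in>I - {j}. Z k) ** N j ** V j = 0" by (simp add: neg_equal_0_iff_equal)
    then show ?thesis using NV[OF j] by (simp add: matrix_mul_assoc[symmetric])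
  qed
  then have "Z k = 0" by (rule eq_zero_if_cosums_zero[OF fin char _ k])
  have "W k = W k ** (Ui k ** (V k ** N k) ** U k)" using UiU[OF k] VN[OF k] by simp
  also have "\<dots> = Z k ** (N k ** U k)" unfolding Z_def by (simp add: matrix_mul_assoc)
  also have "\<dots> = 0" using \<open>Z k = 0\<close> by simp
  finally show ?thesis .
qed

section \<open>Decoding at the terminals of the Char-q-s part\<close>

definition single_message :: "'v \<Rightarrow> 'a::zero \<Rightarrow> 'v \<Rightarrow> 'a" where
  "single_message s v = (\<lambda>n. if n = s then v else 0)"

text \<open>The edge e_k of the paper is (Mn k, Nn k).\<close>

definition e_transfer ::
  "nat \<Rightarrow> (node \<times> node \<Rightarrow> 'a::field^'d^'d) \<Rightarrow> (node \<times> node \<Rightarrow> node \<times> node \<Rightarrow> 'a^'d^'d)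
   \<Rightarrow> nat \<Rightarrow> node \<Rightarrow> 'a^'d^'d" where
  "e_transfer q A K k s =
     (if (s, Mn k) \<in> edges (N2 q) then K (s, Mn k) (Mn k, Nn k) ** A (s, Mn k) else 0)"

lemma sum_edges_single_tail:
  assumes "finite E" "\<And>e. e \<in> E \<Longrightarrow> snd e = h" "\<And>e. e \<in> E \<Longrightarrow> fst e \<noteq> s \<Longrightarrow> f e = 0"
  shows "(\<Sum>e\<in>E. f e) = (if (s, h) \<in> E then f (s, h) else 0)"
proof -
  have "f e = 0" if "e \<in> E - {(s, h)}" for e
    using that assms(2,3) by (metis DiffE insertI1 prod.collapse)
  then show ?thesis
    using sum.remove[OF assms(1), of "(s, h)" f] by (auto intro!: sum.neutral)
qed

lemma sum_two_edges:
  assumes "E = {e1, e2} \<union> X" "e1 \<noteq> e2" "e1 \<notin> X" "e2 \<notin> X" "finite X" "\<And>e. e \<in> X \<Longrightarrow> f e = 0"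
  shows "(\<Sum>e\<in>E. f e) = f e1 + f e2"
  using assms by (simp add: sum.union_disjoint)

lemma N2_values_e_single_message:
  "N2_values q A K (single_message s v) (Mn k, Nn k) = e_transfer q A K k s *v v"
proof -
  let ?f = "\<lambda>e'. K e' (Mn k, Nn k) *v (A e' *v single_message s v (fst e'))"
  have "N2_values q A K (single_message s v) (Mn k, Nn k) = (\<Sum>e'\<in>in_edges (N2 q) (Mn k). ?f e')"
    by (simp add: N2.layered_values_at_L1 layer_simps)
  also have "\<dots> = (if (s, Mn k) \<in> in_edges (N2 q) (Mn k) then ?f (s, Mn k) else 0)"
    by (rule sum_edges_single_tail)
      (auto simp: finite_in_edges_N2[unfolded in_edges_def] in_edges_def single_message_def)
  also have "\<dots> = e_transfer q A K k s *v v"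
    by (simp add: e_transfer_def in_edges_def matrix_vector_mul_assoc single_message_def)
  finally show ?thesis .
qed

lemma N2_values_e_single_message_out:
  "1 \<le> k \<Longrightarrow> k \<le> q + 3 \<Longrightarrow>
     C *v N2_values q A K (single_message s v) (Nn k, h) = (C ** K (Mn k, Nn k) (Nn k, h) ** e_transfer q A K k s) *v v"
  by (simp add: N2_values_Nn N2_values_e_single_message matrix_vector_mul_assoc matrix_mul_assoc)

lemma Rho_decoding_identity:
  fixes A :: "node \<times> node \<Rightarrow> 'a::field^'n^'n"
  assumes q2: "2 \<le> q" and sol: "is_vlnc_solution (N2 q) A K B"
    and i: "i \<in> {2..q+2}" and j: "j \<in> {2..q+2}"
  shows "B (Rho i) (XB i) (Nn i, Rho i) ** K (Mn i, Nn i) (Nn i, Rho i) ** e_transfer q A K i (XB j)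
       + B (Rho i) (XB i) (Nn (q+3), Rho i) ** K (Mn (q+3), Nn (q+3)) (Nn (q+3), Rho i)
         ** e_transfer q A K (q+3) (XB j)
       = (if i = j then mat 1 else 0)"
proof (subst matrix_eq, intro allI)
  fix v :: "'a^'n"
  let ?x = "single_message (XB j) v"
  let ?f = "\<lambda>e. B (Rho i) (XB i) e *v N2_values q A K ?x e"
  have "(\<Sum>e\<in>in_edges (N2 q) (Rho i). ?f e) = ?f (Nn i, Rho i) + ?f (Nn (q+3), Rho i)"
  proof (cases "i \<le> q + 1")
    case True
    show ?thesis using i
      by (intro sum_two_edges[OF in_edges_Rho_mid[OF _ True]])
        (auto simp: N2.layered_values_at_src srcs_N2 single_message_def split: if_splits)
  next
    case False
    then have "i = q + 2" using i by simp
    then show ?thesis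
      by (simp only:) (rule sum_two_edges[OF in_edges_Rho_last[OF q2]],
          auto simp: N2.layered_values_at_src srcs_N2 single_message_def)
  qed
  moreover have "(\<Sum>e\<in>in_edges (N2 q) (Rho i). ?f e) = ?x (XB i)"
    using sol i by (simp add: N2.is_vlnc_solution_iff demands_Rho)
  ultimately show "(B (Rho i) (XB i) (Nn i, Rho i) ** K (Mn i, Nn i) (Nn i, Rho i) ** e_transfer q A K i (XB j)
       + B (Rho i) (XB i) (Nn (q+3), Rho i) ** K (Mn (q+3), Nn (q+3)) (Nn (q+3), Rho i)
         ** e_transfer q A K (q+3) (XB j)) *v v = (if i = j then mat 1 else 0) *v v"
    using i by (simp add: N2_values_e_single_message_out matrix_vector_mult_add_rdistrib)
      (auto simp: single_message_def)
qed

lemma Rho_a_decoding_identity: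
  fixes A :: "node \<times> node \<Rightarrow> 'a::field^'n^'n"
  assumes q2: "2 \<le> q" and sol: "is_vlnc_solution (N2 q) A K B"
  shows "(\<Sum>k\<in>{1..q+2}. B (Rho (q+3)) SA (Nn k, Rho (q+3)) ** K (Mn k, Nn k) (Nn k, Rho (q+3))
            ** e_transfer q A K k s) = (if s = SA then mat 1 else 0)"
proof (subst matrix_eq, intro allI)
  fix v :: "'a^'n"
  let ?x = "single_message s v"
  have "?x SA = (\<Sum>e\<in>in_edges (N2 q) (Rho (q+3)). B (Rho (q+3)) SA e *v N2_values q A K ?x e)"
    using sol by (simp add: N2.is_vlnc_solution_iff demands_Rho)
  also have "\<dots> = (\<Sum>k\<in>{1..q+2}. B (Rho (q+3)) SA (Nn k, Rho (q+3)) *v N2_values q A K ?x (Nn k, Rho (q+3)))"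
    unfolding in_edges_Rho_a[OF q2] by (subst sum.reindex) (auto simp: inj_on_def)
  also have "\<dots> = (\<Sum>k\<in>{1..q+2}. (B (Rho (q+3)) SA (Nn k, Rho (q+3)) ** K (Mn k, Nn k) (Nn k, Rho (q+3))
            ** e_transfer q A K k s) *v v)"
    by (intro sum.cong) (simp_all add: N2_values_e_single_message_out)
  also have "\<dots> = (\<Sum>k\<in>{1..q+2}. B (Rho (q+3)) SA (Nn k, Rho (q+3)) ** K (Mn k, Nn k) (Nn k, Rho (q+3))
            ** e_transfer q A K k s) *v v"
    by (rule matrix_sum_mult_vector[symmetric]) simp
  finally show "(\<Sum>k\<in>{1..q+2}. B (Rho (q+3)) SA (Nn k, Rho (q+3)) ** K (Mn k, Nn k) (Nn k, Rho (q+3))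
            ** e_transfer q A K k s) *v v = (if s = SA then mat 1 else 0) *v v"
    by (simp only: single_message_def) (auto split: if_splits)
qed

lemma e_transfer_XB: "i \<in> {2..q+2} \<Longrightarrow> e_transfer q A K i (XB i) = 0" "e_transfer q A K 1 (XB j) = 0"
  by (auto simp: e_transfer_def mem_edges_Mn)

text \<open>By the decoding identities at Rho 2, ..., Rho (q+3), the terminal Rho (q+3) recovers a
  from e_1 alone, so e_1 carries no information about the source x (the source s of the
  Char-q-s network).\<close>

lemma e_transfer_1_x_zero:
  fixes A :: "node \<times> node \<Rightarrow> 'a::field^'n^'n"
  assumes q2: "2 \<le> q" and char: "of_nat q \<noteq> (0::'a)" and sol: "is_vlnc_solution (N2 q) A K B"
  shows "e_transfer q A K 1 SX = 0"
proof -
  define W where "W k = B (Rho (q+3)) SA (Nn k, Rho (q+3)) ** K (Mn k, Nn k) (Nn k, Rho (q+3))" for k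
  have one_plus_I: "{1..q+2} = insert 1 {2..q+2}" by auto
  have "W k = 0" if "k \<in> {2..q+2}" for k
  proof (rule decoders_vanish[where I = "{2..q+2}" and M = "\<lambda>i j. e_transfer q A K i (XB j)"
        and N = "\<lambda>j. e_transfer q A K (q+3) (XB j)"
        and U = "\<lambda>i. B (Rho i) (XB i) (Nn i, Rho i) ** K (Mn i, Nn i) (Nn i, Rho i)"
        and V = "\<lambda>i. B (Rho i) (XB i) (Nn (q+3), Rho i) ** K (Mn (q+3), Nn (q+3)) (Nn (q+3), Rho i)"])
    show "of_nat (card {2..q+2} - 1) \<noteq> (0::'a)" using char by simp
    show "(\<Sum>k\<in>{2..q+2}. W k ** e_transfer q A K k (XB j)) = 0" if "j \<in> {2..q+2}" for j
    proof -
      have "(\<Sum>k\<in>{1..q+2}. W k ** e_transfer q A K k (XB j)) = 0"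
        using Rho_a_decoding_identity[OF q2 sol, of "XB j"] by (simp add: W_def del: sum.cl_ivl_Suc)
      then show ?thesis
        unfolding one_plus_I using e_transfer_XB(2)[of q A K j] by (simp del: sum.cl_ivl_Suc)
    qed
  qed (use that q2 e_transfer_XB Rho_decoding_identity[OF q2 sol] in auto)
  then have W: "(\<Sum>k\<in>{1..q+2}. W k ** F k) = W 1 ** F 1" for F
    unfolding one_plus_I by (simp del: sum.cl_ivl_Suc)
  have W1: "W 1 ** e_transfer q A K 1 s = (if s = SA then mat 1 else 0)" for s
  proof -
    have "(\<Sum>k\<in>{1..q+2}. W k ** e_transfer q A K k s) = (if s = SA then mat 1 else 0)"
      unfolding W_def by (rule Rho_a_decoding_identity[OF q2 sol])
    then show ?thesis by (simp only: W)
  qed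
  have "e_transfer q A K 1 SA ** W 1 = mat 1" using W1[of SA] matrix_inverse_commute by simp
  then have "e_transfer q A K 1 SX = e_transfer q A K 1 SA ** (W 1 ** e_transfer q A K 1 SX)"
    by (simp add: matrix_mul_assoc)
  then show ?thesis using W1[of SX] by simp
qed

section \<open>Counting in the generalized M-network\<close>

lemma card_UNIV_le_card_range_mult_card_kernel:
  fixes f :: "'b::{finite,ab_group_add} \<Rightarrow> 'c::ab_group_add"
  assumes add: "\<And>x y. f (x + y) = f x + f y"
  shows "CARD('b) \<le> card (range f) * card {x. f x = 0}"
proof -
  have fibre: "card (f -` {c}) = card {x. f x = 0}" if c: "c \<in> range f" for c
  proof -
    obtain x0 where c: "c = f x0" using c by auto
    have minus: "f (y - x0) = f y - f x0" for y
      using add[of "y - x0" x0] by (simp add: algebra_simps)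
    have "f -` {c} = (\<lambda>k. k + x0) ` {x. f x = 0}"
    proof (rule set_eqI, rule iffI)
      fix y assume "y \<in> f -` {c}"
      then have "f (y - x0) = 0" using c minus by simp
      then show "y \<in> (\<lambda>k. k + x0) ` {x. f x = 0}" by (auto intro!: image_eqI[of _ _ "y - x0"])
    qed (use c add in auto)
    moreover have "inj_on (\<lambda>k. k + x0) {x. f x = 0}" by (auto simp: inj_on_def)
    ultimately show ?thesis by (simp add: card_image)
  qed
  have "UNIV = (\<Union>c\<in>range f. f -` {c})" by auto
  then have "CARD('b) \<le> (\<Sum>c\<in>range f. card (f -` {c}))"
    using card_UN_le[of "range f" "\<lambda>c. f -` {c}"] by simp
  also have "\<dots> = card (range f) * card {x. f x = 0}" using fibre by simp
  finally show ?thesis .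
qed

lemma card_UNIV_le_card_mult_card_kernel:
  fixes f :: "'b::{finite,ab_group_add} \<Rightarrow> 'c::{finite,ab_group_add}"
  assumes "\<And>x y. f (x + y) = f x + f y"
  shows "CARD('b) \<le> CARD('c) * card {x. f x = 0}"
proof -
  have "card (range f) \<le> CARD('c)" by (rule card_mono) auto
  then show ?thesis
    by (rule order_trans[OF card_UNIV_le_card_range_mult_card_kernel[OF assms] mult_le_mono1])
qed

lemma vec2_spanned_by_independent_pair:
  fixes v w :: "'a::field^2"
  assumes v: "v \<noteq> 0" and w: "w \<notin> range (\<lambda>c. c *s v)"
  shows "\<exists>a b. u = a *s v + b *s w"
proof -
  define d where "d = v$1 * w$2 - v$2 * w$1"
  have "d \<noteq> 0"
  proof
    assume d: "d = 0"
    show False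
    proof (cases "v$1 = 0")
      case True
      then have "v$2 \<noteq> 0" using v by (auto simp: vec_eq_iff forall_2)
      then have "w$1 = 0" using d True unfolding d_def by simp
      then have "w = (w$2 / v$2) *s v" using True \<open>v$2 \<noteq> 0\<close> by (auto simp: vec_eq_iff forall_2)
      then show False using w by blast
    next
      case False
      have "w$2 = (w$1 / v$1) * v$2" using d False unfolding d_def
        by (simp add: divide_simps) (simp add: algebra_simps)
      then have "w = (w$1 / v$1) *s v" using False by (simp add: vec_eq_iff forall_2)
      then show False using w by blast
    qed
  qed
  define a where "a = (u$1 * w$2 - u$2 * w$1) / d"
  define b where "b = (v$1 * u$2 - v$2 * u$1) / d"
  have "a * v$1 + b * w$1 = u$1" "a * v$2 + b * w$2 = u$2"
    unfolding a_def b_def using \<open>d \<noteq> 0\<close>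
    by (simp_all add: divide_simps) (simp_all add: d_def algebra_simps)
  then have "u = a *s v + b *s w" by (simp add: vec_eq_iff forall_2)
  then show ?thesis by blast
qed

lemma card_subspace_vec2:
  fixes S :: "('a::{finite,field}^2) set"
  assumes zero: "0 \<in> S" and add: "\<And>u v. u \<in> S \<Longrightarrow> v \<in> S \<Longrightarrow> u + v \<in> S"
    and scale: "\<And>c u. u \<in> S \<Longrightarrow> c *s u \<in> S"
  shows "\<exists>e\<le>2. card S = CARD('a) ^ e"
proof (cases "S = {0}")
  case True
  then show ?thesis by (intro exI[of _ 0]) simp
next
  case False
  then obtain v where v: "v \<in> S" "v \<noteq> 0" using zero by auto
  show ?thesis
  proof (cases "S \<subseteq> range (\<lambda>c. c *s v)")
    case True
    have "inj (\<lambda>c::'a. c *s v)"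
    proof (rule injI)
      fix a b :: 'a assume "a *s v = b *s v"
      then have "(a - b) *s v = 0" by (simp add: vec_eq_iff algebra_simps)
      then show "a = b" using v(2) by (auto simp: vec_eq_iff)
    qed
    moreover have "S = range (\<lambda>c. c *s v)" using True scale v by auto
    ultimately show ?thesis by (intro exI[of _ 1]) (simp add: card_image)
  next
    case False
    then obtain w where w: "w \<in> S" "w \<notin> range (\<lambda>c. c *s v)" by auto
    have "u \<in> S" for u
    proof -
      obtain a b where "u = a *s v + b *s w"
        using vec2_spanned_by_independent_pair[OF v(2) w(2)] by blast
      then show ?thesis using add scale v(1) w(1) by metis
    qed
    then have "S = UNIV" by blast
    then show ?thesis by (intro exI[of _ 2]) simp
  qed
qed

definition group_source :: "nat \<Rightarrow> nat \<Rightarrow> node" where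
  "group_source i k = (if i = 1 then (if k = 0 then SA else if k = 1 then SB else SC)
     else if i = 2 then (if k = 0 then SR else if k = 1 then SS else SW)
     else (if k = 0 then SX else if k = 1 then SY else SZ))"

type_synonym 'a group_message = "('a^2) \<times> ('a^2) \<times> ('a^2)"

definition component :: "nat \<Rightarrow> 'a group_message \<Rightarrow> 'a^2" where
  "component k X = (if k = 0 then fst X else if k = 1 then fst (snd X) else snd (snd X))"

definition scale_message :: "'a::comm_ring_1 \<Rightarrow> 'a group_message \<Rightarrow> 'a group_message" where
  "scale_message c X = (c *s fst X, c *s fst (snd X), c *s snd (snd X))"

definition group_messages :: "'a::zero group_message \<Rightarrow> 'a group_message \<Rightarrow> 'a group_message \<Rightarrow> node \<Rightarrow> 'a^2" where
  "group_messages X1 X2 X3 n = (case n of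
       SA \<Rightarrow> component 0 X1 | SB \<Rightarrow> component 1 X1 | SC \<Rightarrow> component 2 X1
     | SR \<Rightarrow> component 0 X2 | SS \<Rightarrow> component 1 X2 | SW \<Rightarrow> component 2 X2
     | SX \<Rightarrow> component 0 X3 | SY \<Rightarrow> component 1 X3 | SZ \<Rightarrow> component 2 X3 | _ \<Rightarrow> 0)"

definition group_map :: "(node \<times> node \<Rightarrow> 'a::field^2^2) \<Rightarrow> (node \<times> node \<Rightarrow> node \<times> node \<Rightarrow> 'a^2^2)
   \<Rightarrow> nat \<Rightarrow> node \<Rightarrow> 'a group_message \<Rightarrow> 'a^2" where
  "group_map A K i h X = (\<Sum>k<3. K (group_source i k, Ub i) (Ub i, h) *v
                                    (A (group_source i k, Ub i) *v component k X))"

definition group_kernel :: "(node \<times> node \<Rightarrow> 'a::field^2^2) \<Rightarrow> (node \<times> node \<Rightarrow> node \<times> node \<Rightarrow> 'a^2^2)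
   \<Rightarrow> nat \<Rightarrow> 'a group_message set" where
  "group_kernel A K i = {X. group_map A K i (Vn i) X = 0}"

lemma in_edges_Ub: "i \<in> {1,2,3} \<Longrightarrow>
   in_edges (N2 q) (Ub i) = (\<lambda>k. (group_source i k, Ub i)) ` {..<3}"
  unfolding in_edges_pair mem_edges_Ub by (auto simp: group_source_def lessThan_nat_numeral)

lemma N2_values_Ub:
  assumes i: "i \<in> {1,2,3}"
  shows "N2_values q A K x (Ub i, h) =
     group_map A K i h (x (group_source i 0), x (group_source i 1), x (group_source i 2))"
proof -
  have "N2_values q A K x (Ub i, h) =
      (\<Sum>e'\<in>in_edges (N2 q) (Ub i). K e' (Ub i, h) *v (A e' *v x (fst e')))"
    by (simp add: N2.layered_values_at_L1 layer_simps)
  also have "\<dots> = (\<Sum>k<3. K (group_source i k, Ub i) (Ub i, h) *v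
                       (A (group_source i k, Ub i) *v x (group_source i k)))"
    using i by (subst in_edges_Ub[OF i], subst sum.reindex)
      (auto simp: inj_on_def group_source_def lessThan_nat_numeral)
  also have "\<dots> = group_map A K i h (x (group_source i 0), x (group_source i 1), x (group_source i 2))"
    unfolding group_map_def
    by (intro sum.cong) (auto simp: component_def lessThan_nat_numeral)
  finally show ?thesis .
qed

lemma group_messages_source:
  "k < 3 \<Longrightarrow> group_messages X1 X2 X3 (group_source 1 k) = component k X1"
  "k < 3 \<Longrightarrow> group_messages X1 X2 X3 (group_source 2 k) = component k X2"
  "k < 3 \<Longrightarrow> group_messages X1 X2 X3 (group_source 3 k) = component k X3"
  by (auto simp: group_messages_def group_source_def component_def numeral_3_eq_3 less_Suc_eq)

lemma N2_values_Ub_group_messages: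
  "N2_values q A K (group_messages X1 X2 X3) (Ub 1, h) = group_map A K 1 h X1"
  "N2_values q A K (group_messages X1 X2 X3) (Ub 2, h) = group_map A K 2 h X2"
  "N2_values q A K (group_messages X1 X2 X3) (Ub 3, h) = group_map A K 3 h X3"
  by (simp_all add: N2_values_Ub group_messages_def group_source_def component_def)

lemma component_add: "component k (X + Y) = component k X + component k Y"
  and component_zero: "component k 0 = 0"
  and component_scale: "component k (scale_message c X) = c *s component k X"
  by (simp_all add: component_def scale_message_def)

lemma group_map_add: "group_map A K i h (X + Y) = group_map A K i h X + group_map A K i h Y"
  and group_map_zero: "group_map A K i h 0 = 0"
  and group_map_scale: "group_map A K i h (scale_message c X) = c *s group_map A K i h X"
  by (simp_all add: group_map_def component_add component_zero component_scale
      matrix_vector_right_distrib vector_scalar_commute sum.distrib vec.scale_sum_right)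

lemma card_group_kernel: "CARD('a::{finite,field})^4 \<le> card (group_kernel (A :: node \<times> node \<Rightarrow> 'a^2^2) K i)"
proof -
  let ?f = "group_map A K i (Vn i)"
  have "CARD('a group_message) \<le> CARD('a^2) * card (group_kernel A K i)"
    unfolding group_kernel_def by (rule card_UNIV_le_card_mult_card_kernel[OF group_map_add])
  then have "CARD('a)^2 * CARD('a)^4 \<le> CARD('a)^2 * card (group_kernel A K i)"
    by (simp add: UNIV_Times_UNIV[symmetric] card_cartesian_product flip: power_add
        del: UNIV_Times_UNIV)
  then show ?thesis by (simp only: mult_le_cancel1) simp
qed

lemma card_component_group_kernel:
  "\<exists>e\<le>2. card (component k ` group_kernel (A :: node \<times> node \<Rightarrow> 'a::{finite,field}^2^2) K i) = CARD('a)^e"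
proof (rule card_subspace_vec2)
  show "0 \<in> component k ` group_kernel A K i"
    by (rule image_eqI[of _ _ 0]) (auto simp: component_zero group_kernel_def group_map_zero)
next
  fix u v assume "u \<in> component k ` group_kernel A K i" "v \<in> component k ` group_kernel A K i"
  then obtain X Y where "X \<in> group_kernel A K i" "Y \<in> group_kernel A K i" "u = component k X" "v = component k Y"
    by auto
  then show "u + v \<in> component k ` group_kernel A K i"
    by (intro image_eqI[of _ _ "X + Y"]) (auto simp: group_kernel_def group_map_add component_add)
next
  fix c u assume "u \<in> component k ` group_kernel A K i"
  then obtain X where "X \<in> group_kernel A K i" "u = component k X" by auto
  then show "c *s u \<in> component k ` group_kernel A K i"
    by (intro image_eqI[of _ _ "scale_message c X"])
      (auto simp: group_kernel_def group_map_scale component_scale)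
qed

lemma group_kernel_subset_components:
  "group_kernel A K i \<subseteq> component 0 ` group_kernel A K i \<times> component 1 ` group_kernel A K i
     \<times> component 2 ` group_kernel A K i"
  by (auto intro!: image_eqI simp: component_def)

lemma G_group_source:
  "k < 3 \<Longrightarrow> G1 ! k = group_source 1 k" "k < 3 \<Longrightarrow> G2 ! k = group_source 2 k"
  "k < 3 \<Longrightarrow> G3 ! k = group_source 3 k"
  by (auto simp: G1_def G2_def G3_def group_source_def numeral_3_eq_3 less_Suc_eq)

lemma demands_Tn:
  assumes "k1 < 3" "k2 < 3" "k3 < 3"
  shows "demands (N2 q) (Tn (9*k1 + 3*k2 + k3 + 1)) =
           {group_source 1 k1, group_source 2 k2, group_source 3 k3}"
proof -
  have e: "9*k1 + 3*k2 + k3 = k3 + (3*k1 + k2) * 3" by simp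
  have "(9*k1 + 3*k2 + k3) div 9 = k1" using assms by auto
  moreover have "(9*k1 + 3*k2 + k3) div 3 = 3*k1 + k2" unfolding e using assms by simp
  moreover have "(9*k1 + 3*k2 + k3) mod 3 = k3" unfolding e mod_mult_self1 using assms by simp
  moreover have "(3*k1 + k2) mod 3 = k2" using assms by simp
  ultimately show ?thesis
    using assms by (simp add: N2_def N2_demands_def G_group_source del: One_nat_def)
qed

lemma extra_edges_into_Tn:
  "{e \<in> extra_edges. snd e = Tn j} =
     (if j \<in> {7,8,9,16,17,18} then {(SW, Tn j)} else {}) \<union> (if 19 \<le> j \<and> j \<le> 24 then {(SC, Tn j)} else {})
     \<union> (if j = 25 then {(SA, Tn j), (Nn 1, Tn j)} else {}) \<union> (if j = 26 then {(SY, Tn j)} else {})"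
  unfolding extra_edges_def by auto

lemma in_edges_Tn:
  "1 \<le> j \<Longrightarrow> j \<le> 27 \<Longrightarrow>
     in_edges (N2 q) (Tn j) = (\<lambda>i. (Vn i, Tn j)) ` {1..5} \<union> {e \<in> extra_edges. snd e = Tn j}"
  unfolding in_edges_pair mem_edges_Tn extra_edges_into_Tn by auto

lemma sum_in_edges_Tn:
  assumes "1 \<le> j" "j \<le> 27"
  shows "(\<Sum>e\<in>in_edges (N2 q) (Tn j). f e) =
           (\<Sum>i\<in>{1..5}. f (Vn i, Tn j)) + (\<Sum>e\<in>{e \<in> extra_edges. snd e = Tn j}. f e)"
  unfolding in_edges_Tn[OF assms] extra_edges_into_Tn
  by (subst sum.union_disjoint) (auto simp: sum.reindex inj_on_def)

lemma sum_1_to_5: "(\<Sum>i\<in>{1..5::nat}. f i) = f 1 + f 2 + f 3 + f 4 + f 5"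
proof -
  have "{1..5::nat} = {1, 2, 3, 4, 5}" by auto
  then show ?thesis by (simp add: add_ac)
qed

text \<open>If the messages of every group lie in the kernel of its edge into Vn i, the first three
  edges into a terminal carry zero; if moreover its extra in-edges carry zero, the terminal
  decodes from the two edges leaving Vn 4 and Vn 5 alone.\<close>

lemma terminal_decodes_from_shared_edges:
  fixes A :: "node \<times> node \<Rightarrow> 'a::{finite,field}^2^2"
  assumes sol: "is_vlnc_solution (N2 q) A K B" and j: "1 \<le> j" "j \<le> 27"
    and X: "X1 \<in> group_kernel A K 1" "X2 \<in> group_kernel A K 2" "X3 \<in> group_kernel A K 3"
    and extra_zero: "\<And>e. e \<in> extra_edges \<Longrightarrow> snd e = Tn j \<Longrightarrow>
      N2_values q A K (group_messages X1 X2 X3) e = 0"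
    and s: "s \<in> demands (N2 q) (Tn j)"
  shows "group_messages X1 X2 X3 s =
      B (Tn j) s (Vn 4, Tn j) *v N2_values q A K (group_messages X1 X2 X3) (Vn 4, Tn j)
      + B (Tn j) s (Vn 5, Tn j) *v N2_values q A K (group_messages X1 X2 X3) (Vn 5, Tn j)"
proof -
  let ?x = "group_messages X1 X2 X3"
  let ?f = "\<lambda>e. B (Tn j) s e *v N2_values q A K ?x e"
  have "group_map A K 1 (Vn 1) X1 = 0" "group_map A K 2 (Vn 2) X2 = 0" "group_map A K 3 (Vn 3) X3 = 0"
    using X by (auto simp: group_kernel_def)
  then have "?f (Vn 1, Tn j) = 0" "?f (Vn 2, Tn j) = 0" "?f (Vn 3, Tn j) = 0"
    by (simp_all add: N2_values_Vn N2_values_Ub_group_messages del: One_nat_def)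
  moreover have "(\<Sum>e\<in>{e \<in> extra_edges. snd e = Tn j}. ?f e) = 0"
    using extra_zero by (intro sum.neutral) simp
  moreover have "?x s = (\<Sum>e\<in>in_edges (N2 q) (Tn j). ?f e)"
    using sol s by (simp add: N2.is_vlnc_solution_iff)
  ultimately show ?thesis by (simp add: sum_in_edges_Tn[OF j] sum_1_to_5 del: One_nat_def)
qed

text \<open>The demanded components are therefore a function of two vectors of F^2.\<close>

lemma terminal_components_bound:
  fixes A :: "node \<times> node \<Rightarrow> 'a::{finite,field}^2^2" and k1 k2 k3 :: nat
  defines "j \<equiv> 9*k1 + 3*k2 + k3 + 1"
  assumes sol: "is_vlnc_solution (N2 q) A K B"
    and k: "k1 < 3" "k2 < 3" "k3 < 3"
    and S: "S1 \<subseteq> group_kernel A K 1" "S2 \<subseteq> group_kernel A K 2" "S3 \<subseteq> group_kernel A K 3"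
    and extra_zero: "\<And>X1 X2 X3 e. X1 \<in> S1 \<Longrightarrow> X2 \<in> S2 \<Longrightarrow> X3 \<in> S3 \<Longrightarrow>
      e \<in> extra_edges \<Longrightarrow> snd e = Tn j \<Longrightarrow> N2_values q A K (group_messages X1 X2 X3) e = 0"
  shows "card (component k1 ` S1 \<times> component k2 ` S2 \<times> component k3 ` S3) \<le> CARD('a)^4"
proof -
  have j: "1 \<le> j" "j \<le> 27" using k unfolding j_def by auto
  define D where "D s a b = B (Tn j) s (Vn 4, Tn j) *v a + B (Tn j) s (Vn 5, Tn j) *v b" for s a b
  define F where
    "F = (\<lambda>(a, b). (D (group_source 1 k1) a b, D (group_source 2 k2) a b, D (group_source 3 k3) a b))"
  have "component k1 ` S1 \<times> component k2 ` S2 \<times> component k3 ` S3 \<subseteq> range F"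
  proof
    fix p assume "p \<in> component k1 ` S1 \<times> component k2 ` S2 \<times> component k3 ` S3"
    then obtain X1 X2 X3 where X: "X1 \<in> S1" "X2 \<in> S2" "X3 \<in> S3"
      and p: "p = (component k1 X1, component k2 X2, component k3 X3)" by auto
    let ?y = "\<lambda>l. N2_values q A K (group_messages X1 X2 X3) (Vn l, Tn j)"
    note decode = terminal_decodes_from_shared_edges[OF sol j, of X1 X2 X3, folded D_def]
    have d: "group_source 1 k1 \<in> demands (N2 q) (Tn j)" "group_source 2 k2 \<in> demands (N2 q) (Tn j)"
      "group_source 3 k3 \<in> demands (N2 q) (Tn j)"
      unfolding j_def demands_Tn[OF k] by simp_all
    have XK: "X1 \<in> group_kernel A K 1" "X2 \<in> group_kernel A K 2" "X3 \<in> group_kernel A K 3"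
      using X S by auto
    have "component k1 X1 = D (group_source 1 k1) (?y 4) (?y 5)"
      using decode[OF XK extra_zero[OF X] d(1)] unfolding group_messages_source(1)[OF k(1)] .
    moreover have "component k2 X2 = D (group_source 2 k2) (?y 4) (?y 5)"
      using decode[OF XK extra_zero[OF X] d(2)] unfolding group_messages_source(2)[OF k(2)] .
    moreover have "component k3 X3 = D (group_source 3 k3) (?y 4) (?y 5)"
      using decode[OF XK extra_zero[OF X] d(3)] unfolding group_messages_source(3)[OF k(3)] .
    ultimately have "p = F (?y 4, ?y 5)" unfolding p F_def by simp
    then show "p \<in> range F" by blast
  qed
  then have "card (component k1 ` S1 \<times> component k2 ` S2 \<times> component k3 ` S3) \<le> card (range F)"
    by (intro card_mono) simp_all
  also have "\<dots> \<le> CARD(('a^2) \<times> ('a^2))" by (rule card_image_le) simp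
  also have "\<dots> = CARD('a)^4"
    by (simp add: UNIV_Times_UNIV[symmetric] card_cartesian_product del: UNIV_Times_UNIV)
  finally show ?thesis .
qed

definition kernel_dim :: "(node \<times> node \<Rightarrow> 'a::{finite,field}^2^2) \<Rightarrow> (node \<times> node \<Rightarrow> node \<times> node \<Rightarrow> 'a^2^2)
   \<Rightarrow> nat \<Rightarrow> nat \<Rightarrow> nat" where
  "kernel_dim A K i k = (SOME t. t \<le> 2 \<and> card (component k ` group_kernel A K i) = CARD('a)^t)"

lemma kernel_dim:
  fixes A :: "node \<times> node \<Rightarrow> 'a::{finite,field}^2^2"
  shows "kernel_dim A K i k \<le> 2" "card (component k ` group_kernel A K i) = CARD('a)^kernel_dim A K i k"
  using someI_ex[OF card_component_group_kernel[of k A K i]] by (simp_all add: kernel_dim_def)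

lemma card_field_gt_1: "1 < CARD('a::{finite,field})"
proof -
  have "card {0, 1::'a} \<le> CARD('a)" by (rule card_mono) simp_all
  then show ?thesis by simp
qed

lemma card_component_product:
  fixes A :: "node \<times> node \<Rightarrow> 'a::{finite,field}^2^2"
  shows "card (component k1 ` group_kernel A K i1 \<times> component k2 ` group_kernel A K i2
            \<times> component k3 ` group_kernel A K i3)
         = CARD('a) ^ (kernel_dim A K i1 k1 + kernel_dim A K i2 k2 + kernel_dim A K i3 k3)"
  by (simp add: card_cartesian_product kernel_dim power_add)

lemma kernel_dim_sum: "4 \<le> kernel_dim A K i 0 + kernel_dim A K i 1 + kernel_dim A K i 2"
proof -
  have "CARD('a)^4 \<le> card (group_kernel A K i)" by (rule card_group_kernel)
  also have "\<dots> \<le> card (component 0 ` group_kernel A K i \<times> component 1 ` group_kernel A K i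
      \<times> component 2 ` group_kernel A K i)"
    by (intro card_mono group_kernel_subset_components) simp
  finally show ?thesis
    unfolding card_component_product using power_le_imp_le_exp[OF card_field_gt_1] by blast
qed

lemma kernel_dim_pure_terminal:
  fixes A :: "node \<times> node \<Rightarrow> 'a::{finite,field}^2^2"
  assumes sol: "is_vlnc_solution (N2 q) A K B"
    and pure: "(k1 < 2 \<and> k2 < 2 \<and> k3 < 3) \<or> (k1 = 2 \<and> k2 = 2 \<and> k3 = 2)"
  shows "kernel_dim A K 1 k1 + kernel_dim A K 2 k2 + kernel_dim A K 3 k3 \<le> 4"
proof -
  have "{e \<in> extra_edges. snd e = Tn (9*k1 + 3*k2 + k3 + 1)} = {}"
    using pure unfolding extra_edges_into_Tn by (auto simp: less_Suc_eq numeral_eq_Suc)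
  then have "card (component k1 ` group_kernel A K 1 \<times> component k2 ` group_kernel A K 2
      \<times> component k3 ` group_kernel A K 3) \<le> CARD('a)^4"
    using pure by (intro terminal_components_bound[OF sol]) auto
  then show ?thesis
    unfolding card_component_product using power_le_imp_le_exp[OF card_field_gt_1] by blast
qed

text \<open>The a_k, b_k, c_k stand for the dimensions of the projections of the three kernels; the
  hypotheses are those given by the terminals without extra in-edges.\<close>

lemma kernel_dims_forced:
  fixes a0 a1 a2 b0 b1 b2 c0 c1 c2 :: nat
  assumes le: "a0 \<le> 2" "a1 \<le> 2" "a2 \<le> 2" "b0 \<le> 2" "b1 \<le> 2" "b2 \<le> 2" "c0 \<le> 2" "c1 \<le> 2" "c2 \<le> 2"
    and pure: "\<And>a b c. a \<in> {a0, a1} \<Longrightarrow> b \<in> {b0, b1} \<Longrightarrow> c \<in> {c0, c1, c2} \<Longrightarrow> a + b + c \<le> 4"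
    and pure_last: "a2 + b2 + c2 \<le> 4"
    and sums: "4 \<le> a0 + a1 + a2" "4 \<le> b0 + b1 + b2" "4 \<le> c0 + c1 + c2"
  shows "b2 = 2 \<and> c0 = 2 \<and> a1 \<le> 1"
proof -
  have "max c0 (max c1 c2) = 2" using sums(3) le by (auto simp: max_def)
  moreover have "max a0 a1 + max b0 b1 + max c0 (max c1 c2) \<le> 4"
    by (rule pure) (auto simp: max_def)
  moreover have "a2 \<ge> 4 - 2 * max a0 a1" "b2 \<ge> 4 - 2 * max b0 b1"
    using sums(1,2) by (auto simp: max_def)
  ultimately have "max a0 a1 = 1" "b2 = 2" "a2 = 2" using le by (auto simp: max_def)
  then show ?thesis using pure_last sums(3) le by (auto simp: max_def split: if_splits)
qed

text \<open>If the kernel of group 1 has no message with a = 0 and c \<noteq> 0, the messages (0, b, c)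
  of the kernel, which form a space of dimension at least 2, all have c = 0; so every b occurs.\<close>

lemma component_1_group_kernel_full:
  fixes A :: "node \<times> node \<Rightarrow> 'a::{finite,field}^2^2"
  assumes c_trivial: "card (component 2 ` {X \<in> group_kernel A K 1. component 0 X = 0}) \<le> 1"
  shows "component 1 ` group_kernel A K 1 = UNIV"
proof -
  let ?S = "{X \<in> group_kernel A K 1. component 0 X = 0}"
  have "0 \<in> ?S" by (simp add: group_kernel_def group_map_zero component_zero)
  have c0: "c = 0" if "(0, b, c) \<in> group_kernel A K 1" for b c
  proof -
    have "(0, b, c) \<in> ?S" using that by (simp add: component_def)
    then have "c \<in> component 2 ` ?S" by (rule rev_image_eqI) (simp add: component_def)
    moreover have "0 \<in> component 2 ` ?S"
      using \<open>0 \<in> ?S\<close> by (rule rev_image_eqI) (simp add: component_zero)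
    moreover have "card (component 2 ` ?S) \<le> Suc 0" using c_trivial by simp
    ultimately show ?thesis using card_le_Suc0_iff_eq[OF finite, of "component 2 ` ?S"] by blast
  qed
  define psi where "psi p = group_map A K 1 (Vn 1) (0, p)" for p :: "('a^2) \<times> ('a^2)"
  have "psi (p + p') = psi p + psi p'" for p p'
  proof -
    have "((0::'a^2), p + p') = (0, p) + (0, p')" by simp
    then show ?thesis by (simp only: psi_def group_map_add)
  qed
  then have "CARD(('a^2) \<times> ('a^2)) \<le> CARD('a^2) * card {p. psi p = 0}"
    by (rule card_UNIV_le_card_mult_card_kernel)
  then have "CARD('a^2) * CARD('a^2) \<le> CARD('a^2) * card {p. psi p = 0}"
    by (simp only: UNIV_Times_UNIV[symmetric] card_cartesian_product)
  then have "CARD('a^2) \<le> card {p. psi p = 0}" by (simp only: mult_le_cancel1) simp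
  also have "\<dots> \<le> card ((\<lambda>b. (b, 0::'a^2)) ` {b. psi (b, 0) = 0})"
  proof (intro card_mono subsetI)
    fix p assume "p \<in> {p. psi p = 0}"
    moreover obtain b c where p: "p = (b, c)" by fastforce
    ultimately have "psi (b, c) = 0" by simp
    then have "c = 0" using c0[of b c] by (simp add: psi_def group_kernel_def)
    with \<open>psi (b, c) = 0\<close> show "p \<in> (\<lambda>b. (b, 0)) ` {b. psi (b, 0) = 0}" using p by blast
  qed simp
  also have "\<dots> \<le> card {b. psi (b, 0) = 0}" by (rule card_image_le) simp
  finally have "{b. psi (b, 0) = 0} = UNIV" by (metis card_seteq finite subset_UNIV)
  then have "(0, b, 0) \<in> group_kernel A K 1" for b by (auto simp: psi_def group_kernel_def)
  then show ?thesis by (auto intro!: image_eqI simp: component_def)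
qed

text \<open>Terminal Tn 25 demands (c, w, x) and sees, besides Vn 1, ..., Vn 5, only the source a
  and the edge e_1; if e_1 carries no information about x, both extra edges vanish on
  messages with a = 0.\<close>

lemma no_solution_with_e1_blind_to_x:
  fixes A :: "node \<times> node \<Rightarrow> 'a::{finite,field}^2^2"
  assumes sol: "is_vlnc_solution (N2 q) A K B" and blind: "e_transfer q A K 1 SX = 0"
  shows False
proof -
  let ?d = "kernel_dim A K"
  have "?d 2 2 = 2 \<and> ?d 3 0 = 2 \<and> ?d 1 1 \<le> 1"
  proof (rule kernel_dims_forced)
    fix a b c assume "a \<in> {?d 1 0, ?d 1 1}" "b \<in> {?d 2 0, ?d 2 1}" "c \<in> {?d 3 0, ?d 3 1, ?d 3 2}"
    then obtain k1 k2 k3 where "k1 \<in> {0, 1}" "k2 \<in> {0, 1}" "k3 \<in> {0, 1, 2}"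
      and "a = ?d 1 k1" "b = ?d 2 k2" "c = ?d 3 k3" by blast
    then show "a + b + c \<le> 4" using kernel_dim_pure_terminal[OF sol, of k1 k2 k3] by auto
  qed (use kernel_dim kernel_dim_sum kernel_dim_pure_terminal[OF sol, of 2 2 2] in auto)
  then have dims: "?d 2 2 = 2" "?d 3 0 = 2" "?d 1 1 \<le> 1" by auto
  let ?S = "{X \<in> group_kernel A K 1. component 0 X = 0}"
  have in_Mn1: "in_edges (N2 q) (Mn 1) = {(SA, Mn 1), (SX, Mn 1)}"
    unfolding in_edges_pair mem_edges_Mn by auto
  have "card (component 2 ` ?S \<times> component 2 ` group_kernel A K 2 \<times> component 0 ` group_kernel A K 3)
      \<le> CARD('a)^4"
  proof (rule terminal_components_bound[OF sol, where ?k1.0 = 2 and ?k2.0 = 2 and ?k3.0 = 0])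
    fix X1 X2 X3 e assume X1: "X1 \<in> ?S" and "e \<in> extra_edges" "snd e = Tn (9 * 2 + 3 * 2 + 0 + 1)"
    then have e: "e \<in> extra_edges" "snd e = Tn 25" by simp_all
    have a0: "group_messages X1 X2 X3 SA = 0" using X1 by (simp add: group_messages_def)
    have "N2_values q A K (group_messages X1 X2 X3) (Mn 1, Nn 1) = 0"
      using a0 blind
      by (simp add: N2.layered_values_at_L1 layer_simps in_Mn1 e_transfer_def mem_edges_Mn
          matrix_vector_mul_assoc del: One_nat_def)
    moreover have "e = (SA, Tn 25) \<or> e = (Nn 1, Tn 25)" using e by (auto simp: extra_edges_def)
    ultimately show "N2_values q A K (group_messages X1 X2 X3) e = 0"
      using a0 by (auto simp: N2_values_Nn N2.layered_values_at_src srcs_N2 simp del: One_nat_def)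
  qed auto
  then have "card (component 2 ` ?S) * CARD('a)^4 \<le> 1 * CARD('a)^4"
    using dims by (simp add: card_cartesian_product kernel_dim flip: power_add)
  then have "card (component 2 ` ?S) \<le> 1" using card_field_gt_1 by simp
  then have "component 1 ` group_kernel A K 1 = UNIV" by (rule component_1_group_kernel_full)
  then have "CARD('a) ^ ?d 1 1 = CARD('a) ^ 2" using kernel_dim(2)[of 1 A K 1] by simp
  then show False using dims card_field_gt_1[where 'a = 'a] by (simp add: power_inject_exp)
qed

section \<open>A two-dimensional solution when the characteristic divides q\<close>

definition matrix_unit :: "2 \<Rightarrow> 2 \<Rightarrow> 'a::zero_neq_one^2^2" where
  "matrix_unit a b = (\<chi> i j. if i = a \<and> j = b then 1 else 0)"

definition coord :: "nat \<Rightarrow> 2" where "coord k = (if k = 0 then 1 else 2)"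

lemma matrix_unit_mult_vector: "matrix_unit a b *v v = (\<chi> i. if i = a then v $ b else 0)"
  by (simp add: matrix_unit_def matrix_vector_mult_def vec_eq_iff if_distrib if_distribR sum.delta
      cong: if_cong)

text \<open>The coding of M_3: Vn 1, Vn 2, Vn 3 receive (a_1, b_1), (r_1, s_1) and z; Vn 4 receives
  (a_2, b_2), w and (x_1, y_1); Vn 5 receives c, (r_2, s_2) and (x_2, y_2).  The edge from Vn 4
  (resp. Vn 5) to the terminal demanding the sources with indices k1, k2, k3 packs the first
  coordinate of its group-3 source with the second coordinate of its group-1 (resp. group-2)
  source, except for the terminals demanding both c and w, which receive w and c instead.\<close>

definition code_Ub :: "nat \<Rightarrow> nat \<Rightarrow> node \<Rightarrow> 'a::field^2^2" where
  "code_Ub i l s = (if i = 1 then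
        (if l = 1 then (if s = SA then matrix_unit 1 1 else if s = SB then matrix_unit 2 1 else 0)
         else if l = 4 then (if s = SA then matrix_unit 1 2 else if s = SB then matrix_unit 2 2 else 0)
         else if l = 5 then (if s = SC then mat 1 else 0) else 0)
     else if i = 2 then
        (if l = 2 then (if s = SR then matrix_unit 1 1 else if s = SS then matrix_unit 2 1 else 0)
         else if l = 4 then (if s = SW then mat 1 else 0)
         else if l = 5 then (if s = SR then matrix_unit 1 2 else if s = SS then matrix_unit 2 2 else 0) else 0)
     else
        (if l = 3 then (if s = SZ then mat 1 else 0)
         else if l = 4 then (if s = SX then matrix_unit 1 1 else if s = SY then matrix_unit 2 1 else 0)
         else if l = 5 then (if s = SX then matrix_unit 1 2 else if s = SY then matrix_unit 2 2 else 0) else 0))"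

definition index1 :: "nat \<Rightarrow> nat" where "index1 j = (j - 1) div 9"
definition index2 :: "nat \<Rightarrow> nat" where "index2 j = ((j - 1) div 3) mod 3"
definition index3 :: "nat \<Rightarrow> nat" where "index3 j = (j - 1) mod 3"

definition code_Vn :: "nat \<Rightarrow> nat \<Rightarrow> nat \<Rightarrow> 'a::field^2^2" where
  "code_Vn l j g = (if l \<le> 3 then (if g = l then mat 1 else 0)
     else if l = 4 then
       (if index1 j = 2 \<and> index2 j = 2 then (if g = 2 then mat 1 else 0)
        else if g = 3 then (if index3 j < 2 then matrix_unit 1 (coord (index3 j)) else 0)
        else if g = 1 then (if index1 j < 2 then matrix_unit 2 (coord (index1 j)) else 0) else 0)
     else
       (if index1 j = 2 \<and> index2 j = 2 then (if g = 1 then mat 1 else 0)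
        else if g = 3 then (if index3 j < 2 then matrix_unit 1 (coord (index3 j)) else 0)
        else if g = 2 then (if index2 j < 2 then matrix_unit 2 (coord (index2 j)) else 0) else 0))"

definition code_K :: "node \<times> node \<Rightarrow> node \<times> node \<Rightarrow> 'a::field^2^2" where
  "code_K e' e = (case fst e of Mn _ \<Rightarrow> mat 1 | Nn _ \<Rightarrow> mat 1
     | Ub i \<Rightarrow> (case snd e of Vn l \<Rightarrow> code_Ub i l (fst e') | _ \<Rightarrow> 0)
     | Vn l \<Rightarrow> (case snd e of Tn j \<Rightarrow> (case fst e' of Ub g \<Rightarrow> code_Vn l j g | _ \<Rightarrow> 0) | _ \<Rightarrow> 0)
     | _ \<Rightarrow> 0)"

definition decode_Tn :: "nat \<Rightarrow> node \<Rightarrow> node \<Rightarrow> 'a::field^2^2" where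
  "decode_Tn j s a = (let k1 = index1 j; k2 = index2 j; k3 = index3 j in
     if s = group_source 1 k1 then
       (if k1 < 2 then (if a = Vn 1 then matrix_unit 1 (coord k1) else if a = Vn 4 then matrix_unit 2 2 else 0)
        else if k2 = 2 then (if a = Vn 5 then mat 1 else 0) else (if a = SC then mat 1 else 0))
     else if s = group_source 2 k2 then
       (if k2 < 2 then (if a = Vn 2 then matrix_unit 1 (coord k2) else if a = Vn 5 then matrix_unit 2 2 else 0)
        else if k1 = 2 then (if a = Vn 4 then mat 1 else 0) else (if a = SW then mat 1 else 0))
     else if s = group_source 3 k3 then
       (if k3 = 2 then (if a = Vn 3 then mat 1 else 0)
        else if k1 = 2 \<and> k2 = 2 then
          (if k3 = 0 then (if a = Nn 1 then mat 1 else if a = SA then - mat 1 else 0)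
           else (if a = SY then mat 1 else 0))
        else (if a = Vn 4 then matrix_unit 1 1 else if a = Vn 5 then matrix_unit 2 1 else 0))
     else 0)"

text \<open>In the Char-q-s part every edge carries the sum of its inputs, so e_(q+3) carries the sum
  of all its sources.  Rho 1 and Rho i subtract e_1, resp. e_i, and the sources they see directly
  from e_(q+3); Rho (q+3) adds e_1, ..., e_(q+2).\<close>

definition decode_Rho :: "nat \<Rightarrow> nat \<Rightarrow> node \<Rightarrow> 'a::field^2^2" where
  "decode_Rho q i a = (if i = 1 then (if a = Nn (q+3) then mat 1 else if a = Nn 1 then - mat 1
                              else if (\<exists>k. a = XB k) then - mat 1 else 0)
     else if i \<le> q + 2 then (if a = Nn (q+3) then mat 1 else if a = Nn i then - mat 1
                              else if a = SX \<or> a = SA then - mat 1 else 0)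
     else (if (\<exists>k. a = Nn k) then mat 1 else 0))"

definition code_B :: "nat \<Rightarrow> node \<Rightarrow> node \<Rightarrow> node \<times> node \<Rightarrow> 'a::field^2^2" where
  "code_B q t s e = (case t of Tn j \<Rightarrow> decode_Tn j s (fst e) | Rho i \<Rightarrow> decode_Rho q i (fst e) | _ \<Rightarrow> 0)"

abbreviation code_values where "code_values q \<equiv> N2_values q (\<lambda>_. mat 1) code_K"

lemma code_values_src: "s \<in> srcs (N2 q) \<Longrightarrow> code_values q x (s, h) = x s"
  by (simp add: N2.layered_values_at_src)

lemma code_values_Nn: "1 \<le> k \<Longrightarrow> k \<le> q + 3 \<Longrightarrow> code_values q x (Nn k, h) = code_values q x (Mn k, Nn k)"
  by (simp add: N2_values_Nn code_K_def)

definition XB_into :: "nat \<Rightarrow> nat \<Rightarrow> nat set" where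
  "XB_into q k = {i. 2 \<le> i \<and> i \<le> q+2 \<and> ((2 \<le> k \<and> k \<le> q+2 \<and> i \<noteq> k) \<or> k = q+3)}"

lemma XB_into_simps: "2 \<le> q \<Longrightarrow> XB_into q (q+3) = {2..q+2}" "XB_into q 1 = {}"
  "2 \<le> i \<Longrightarrow> i \<le> q + 2 \<Longrightarrow> XB_into q i = {2..q+2} - {i}"
  by (auto simp: XB_into_def)

lemma code_values_e: "code_values q x (Mn k, Nn k) =
   (if (1 \<le> k \<and> k \<le> q+1) \<or> k = q+3 then x SA else 0) + (if k = 1 \<or> (4 \<le> k \<and> k \<le> q+3) then x SX else 0)
   + (\<Sum>i\<in>XB_into q k. x (XB i))"
proof -
  let ?SA = "if (1 \<le> k \<and> k \<le> q+1) \<or> k = q+3 then {SA} else {}"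
  let ?SX = "if k = 1 \<or> (4 \<le> k \<and> k \<le> q+3) then {SX} else {}"
  have tails: "{s. (s, Mn k) \<in> edges (N2 q)} = ?SA \<union> ?SX \<union> XB ` XB_into q k"
    unfolding mem_edges_Mn XB_into_def by auto
  have "in_edges (N2 q) (Mn k) = (\<lambda>s. (s, Mn k)) ` {s. (s, Mn k) \<in> edges (N2 q)}"
    unfolding in_edges_pair by auto
  then have "code_values q x (Mn k, Nn k) = (\<Sum>s\<in>{s. (s, Mn k) \<in> edges (N2 q)}. x s)"
    by (simp add: N2.layered_values_at_L1 layer_simps code_K_def sum.reindex inj_on_def)
  also have "\<dots> = (\<Sum>s\<in>?SA. x s) + (\<Sum>s\<in>?SX. x s) + (\<Sum>s\<in>XB ` XB_into q k. x s)"
    unfolding tails by (subst sum.union_disjoint; (auto simp: XB_into_def)?)+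
  also have "(\<Sum>s\<in>XB ` XB_into q k. x s) = (\<Sum>i\<in>XB_into q k. x (XB i))"
    by (simp add: sum.reindex inj_on_def)
  finally show ?thesis by simp
qed

lemma code_decodes_Rho_1:
  assumes q2: "2 \<le> q"
  shows "(\<Sum>e\<in>in_edges (N2 q) (Rho 1). code_B q (Rho 1) s e *v code_values q x e) = x (XB (q+2))"
proof -
  let ?f = "\<lambda>e. code_B q (Rho 1) s e *v code_values q x e"
  have "(\<Sum>e\<in>in_edges (N2 q) (Rho 1). ?f e) = ?f (Nn 1, Rho 1) + ?f (Nn (q+3), Rho 1)
      + (\<Sum>e\<in>(\<lambda>i. (XB i, Rho 1)) ` {2..q+1}. ?f e)"
    unfolding in_edges_Rho_1 by (subst sum.union_disjoint) auto
  also have "(\<Sum>e\<in>(\<lambda>i. (XB i, Rho 1)) ` {2..q+1}. ?f e) = (\<Sum>i\<in>{2..q+1}. - x (XB i))"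
    by (subst sum.reindex)
      (auto simp: inj_on_def code_B_def decode_Rho_def code_values_src srcs_N2 intro!: sum.cong)
  also have "?f (Nn 1, Rho 1) = - (x SA + x SX)"
    by (simp add: code_B_def decode_Rho_def code_values_Nn code_values_e XB_into_simps del: One_nat_def)
  also have "?f (Nn (q+3), Rho 1) = x SA + x SX + (\<Sum>i\<in>{2..q+2}. x (XB i))"
    using q2 by (simp add: code_B_def decode_Rho_def code_values_Nn code_values_e XB_into_simps)
  also have "(\<Sum>i\<in>{2..q+2}. x (XB i)) = (\<Sum>i\<in>{2..q+1}. x (XB i)) + x (XB (q+2))"
    using q2 by (simp add: sum.cl_ivl_Suc)
  finally show ?thesis by (simp add: sum_negf)
qed

lemma code_decodes_Rho_mid:
  assumes q2: "2 \<le> q" and i: "2 \<le> i" "i \<le> q + 1"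
  shows "(\<Sum>e\<in>in_edges (N2 q) (Rho i). code_B q (Rho i) s e *v code_values q x e) = x (XB i)"
proof -
  let ?f = "\<lambda>e. code_B q (Rho i) s e *v code_values q x e"
  have "(\<Sum>e\<in>in_edges (N2 q) (Rho i). ?f e) = ?f (Nn i, Rho i) + ?f (Nn (q+3), Rho i)
      + (if i \<le> 3 then - x SX else 0)"
    unfolding in_edges_Rho_mid[OF i] using i
    by (auto simp: code_B_def decode_Rho_def code_values_src srcs_N2)
  moreover have "?f (Nn i, Rho i) = - (x SA + (if 4 \<le> i then x SX else 0)
       + (\<Sum>k\<in>{2..q+2} - {i}. x (XB k)))"
    using i by (simp add: code_B_def decode_Rho_def code_values_Nn code_values_e XB_into_simps)
  moreover have "?f (Nn (q+3), Rho i) = x SA + x SX + (\<Sum>k\<in>{2..q+2}. x (XB k))"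
    using q2 i by (simp add: code_B_def decode_Rho_def code_values_Nn code_values_e XB_into_simps)
  moreover have "(\<Sum>k\<in>{2..q+2}. x (XB k)) = x (XB i) + (\<Sum>k\<in>{2..q+2} - {i}. x (XB k))"
    using i by (intro sum.remove) auto
  ultimately show ?thesis by (auto simp del: sum.cl_ivl_Suc)
qed

lemma code_decodes_Rho_last:
  assumes q2: "2 \<le> q"
  shows "(\<Sum>e\<in>in_edges (N2 q) (Rho (q+2)). code_B q (Rho (q+2)) s e *v code_values q x e) = x (XB (q+2))"
proof -
  let ?i = "q + 2"
  let ?f = "\<lambda>e. code_B q (Rho ?i) s e *v code_values q x e"
  have "(\<Sum>e\<in>in_edges (N2 q) (Rho ?i). ?f e) = ?f (Nn ?i, Rho ?i) + ?f (Nn (q+3), Rho ?i) - x SA"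
    unfolding in_edges_Rho_last[OF q2] using q2
    by (auto simp: code_B_def decode_Rho_def code_values_src srcs_N2)
  moreover have "?f (Nn ?i, Rho ?i) = - (x SX + (\<Sum>k\<in>{2..q+2} - {?i}. x (XB k)))"
    using q2 by (simp add: code_B_def decode_Rho_def code_values_Nn code_values_e XB_into_simps)
  moreover have "?f (Nn (q+3), Rho ?i) = x SA + x SX + (\<Sum>k\<in>{2..q+2}. x (XB k))"
    using q2 by (simp add: code_B_def decode_Rho_def code_values_Nn code_values_e XB_into_simps)
  moreover have "(\<Sum>k\<in>{2..q+2}. x (XB k)) = x (XB ?i) + (\<Sum>k\<in>{2..q+2} - {?i}. x (XB k))"
    by (intro sum.remove) auto
  ultimately show ?thesis by (auto simp del: sum.cl_ivl_Suc)
qed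

lemma sum_if_eq_card_mult:
  "finite A \<Longrightarrow> (\<Sum>k\<in>A. if P k then a else 0) = of_nat (card {k\<in>A. P k}) * (a::'a::semiring_1)"
  by (simp add: sum.inter_filter[symmetric])

text \<open>Among e_1, ..., e_(q+2) the source a enters q+1 edges, and s and each x_i enter q
  edges.\<close>

lemma sum_code_values_e:
  assumes q2: "2 \<le> q" and char: "of_nat q = (0::'a::field)"
  shows "(\<Sum>k\<in>{1..q+2}. code_values q (x :: node \<Rightarrow> 'a^2) (Mn k, Nn k) $ c) = x SA $ c"
proof -
  let ?A = "\<lambda>k. (1 \<le> k \<and> k \<le> q+1) \<or> k = q+3"
  let ?X = "\<lambda>k. k = 1 \<or> (4 \<le> k \<and> k \<le> q+3)"
  have e: "code_values q x (Mn k, Nn k) $ c = (if ?A k then x SA $ c else 0) + (if ?X k then x SX $ c else 0)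
     + (\<Sum>i\<in>{2..q+2}. if i \<in> XB_into q k then x (XB i) $ c else 0)" for k
  proof -
    have "{2..q+2} \<inter> XB_into q k = XB_into q k" by (auto simp: XB_into_def)
    moreover have "(\<Sum>i\<in>{2..q+2}. if i \<in> XB_into q k then x (XB i) $ c else 0)
        = (\<Sum>i\<in>{2..q+2} \<inter> XB_into q k. x (XB i) $ c)"
      by (rule sum.inter_restrict[symmetric]) simp
    ultimately show ?thesis by (simp add: code_values_e del: sum.cl_ivl_Suc)
  qed
  have "{k\<in>{1..q+2}. ?A k} = {1..q+1}" by auto
  then have sA: "(\<Sum>k\<in>{1..q+2}. if ?A k then x SA $ c else 0) = of_nat (q+1) * x SA $ c"
    by (simp only: sum_if_eq_card_mult[OF finite_atLeastAtMost]) simp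
  have "{k\<in>{1..q+2}. ?X k} = insert 1 {4..q+2}" using q2 by auto
  then have sX: "(\<Sum>k\<in>{1..q+2}. if ?X k then x SX $ c else 0) = of_nat q * x SX $ c"
    using q2 by (simp only: sum_if_eq_card_mult[OF finite_atLeastAtMost]) simp
  have "(\<Sum>k\<in>{1..q+2}. if i \<in> XB_into q k then x (XB i) $ c else 0) = of_nat q * x (XB i) $ c"
    if i: "i \<in> {2..q+2}" for i
  proof -
    have "{k\<in>{1..q+2}. i \<in> XB_into q k} = {2..q+2} - {i}" using i by (auto simp: XB_into_def)
    then show ?thesis using i by (simp only: sum_if_eq_card_mult[OF finite_atLeastAtMost]) simp
  qed
  then have sXB: "(\<Sum>k\<in>{1..q+2}. \<Sum>i\<in>{2..q+2}. if i \<in> XB_into q k then x (XB i) $ c else 0)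
       = (\<Sum>i\<in>{2..q+2}. of_nat q * x (XB i) $ c)"
    by (subst sum.swap) (rule sum.cong, simp_all)
  show ?thesis
    unfolding e sum.distrib sA sX sXB using char by simp
qed

lemma code_decodes_Rho_a:
  assumes q2: "2 \<le> q" and char: "of_nat q = (0::'a::field)"
  shows "(\<Sum>e\<in>in_edges (N2 q) (Rho (q+3)). code_B q (Rho (q+3)) s e *v code_values q (x :: node \<Rightarrow> 'a^2) e)
     = x SA"
proof -
  have "(\<Sum>e\<in>in_edges (N2 q) (Rho (q+3)). code_B q (Rho (q+3)) s e *v code_values q x e)
      = (\<Sum>k\<in>{1..q+2}. code_values q x (Mn k, Nn k))"
    unfolding in_edges_Rho_a[OF q2]
    by (subst sum.reindex) (auto simp: inj_on_def code_B_def decode_Rho_def code_values_Nn intro!: sum.cong)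
  also have "\<dots> = x SA"
    using sum_code_values_e[OF q2 char] by (simp add: vec_eq_iff)
  finally show ?thesis .
qed

lemma code_values_Ub: "i \<in> {1,2,3} \<Longrightarrow> code_values q x (Ub i, Vn l) =
   (\<Sum>k<3. code_Ub i l (group_source i k) *v x (group_source i k))"
  by (simp add: N2_values_Ub group_map_def code_K_def component_def lessThan_nat_numeral)

lemma code_values_Vn_private: "l \<in> {1,2,3} \<Longrightarrow> code_values q x (Vn l, Tn j) = code_values q x (Ub l, Vn l)"
  by (auto simp: N2_values_Vn code_K_def code_Vn_def)

lemma code_values_Vn_shared: "l \<in> {4,5} \<Longrightarrow> code_values q x (Vn l, Tn j) =
   code_Vn l j 1 *v code_values q x (Ub 1, Vn l) + code_Vn l j 2 *v code_values q x (Ub 2, Vn l)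
   + code_Vn l j 3 *v code_values q x (Ub 3, Vn l)"
  by (simp add: N2.layered_values_at_L2 layer_simps in_edges_Vn_shared code_K_def add.assoc)

lemma code_decodes_Tn:
  assumes k: "k1 < 3" "k2 < 3" "k3 < 3"
    and s: "s \<in> demands (N2 q) (Tn (9*k1 + 3*k2 + k3 + 1))"
  shows "(\<Sum>e\<in>in_edges (N2 q) (Tn (9*k1 + 3*k2 + k3 + 1)).
            code_B q (Tn (9*k1 + 3*k2 + k3 + 1)) s e *v code_values q x e) = x s"
proof -
  have j: "1 \<le> 9*k1 + 3*k2 + k3 + 1" "9*k1 + 3*k2 + k3 + 1 \<le> 27" using k by auto
  from k have "k1 = 0 \<or> k1 = 1 \<or> k1 = 2" "k2 = 0 \<or> k2 = 1 \<or> k2 = 2" "k3 = 0 \<or> k3 = 1 \<or> k3 = 2"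
    by auto
  then show ?thesis
    using s unfolding sum_in_edges_Tn[OF j] demands_Tn[OF k] sum_1_to_5
    by (elim disjE)
      (auto simp: code_B_def decode_Tn_def index1_def index2_def index3_def group_source_def
        coord_def code_values_Vn_private code_values_Vn_shared code_values_Ub code_Vn_def code_Ub_def
        matrix_unit_mult_vector vec_eq_iff forall_2 code_values_src srcs_N2 code_values_Nn
        code_values_e XB_into_simps(2) extra_edges_into_Tn lessThan_nat_numeral
        simp del: One_nat_def)
qed

lemma demands_Tn_nonempty:
  assumes "demands (N2 q) (Tn j) \<noteq> {}"
  obtains k1 k2 k3 where "k1 < 3" "k2 < 3" "k3 < 3" "j = 9*k1 + 3*k2 + k3 + 1"
proof -
  have j: "1 \<le> j" "j \<le> 27" using assms by (auto simp: N2_def N2_demands_def split: if_splits)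
  then have "j = (j - 1) + 1" by simp
  moreover have "j - 1 = 9 * ((j - 1) div 9) + (j - 1) mod 9" by simp
  moreover have "(j - 1) mod 9 = 3 * ((j - 1) div 3 mod 3) + (j - 1) mod 3"
    using mod_mult2_eq[of "j - 1" 3 3] by simp
  ultimately have "j = 9 * ((j - 1) div 9) + 3 * ((j - 1) div 3 mod 3) + (j - 1) mod 3 + 1"
    by (simp only: add.assoc)
  then show ?thesis using j by (intro that) auto
qed

lemma code_is_vlnc_solution:
  assumes q2: "2 \<le> q" and char: "of_nat q = (0::'a::field)"
  shows "is_vlnc_solution (N2 q) (\<lambda>_. mat 1 :: 'a^2^2) code_K (code_B q)"
  unfolding N2.is_vlnc_solution_iff
proof (intro allI ballI)
  fix x :: "node \<Rightarrow> 'a^2" and t s assume s: "s \<in> demands (N2 q) t"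
  show "(\<Sum>e\<in>in_edges (N2 q) t. code_B q t s e *v code_values q x e) = x s"
  proof (cases t)
    case (Rho i)
    consider "i = 1" | "2 \<le> i" "i \<le> q + 1" | "i = q + 2" | "i = q + 3"
      using demands_Rho(4)[of q i] s Rho by force
    then show ?thesis
    proof cases
      case 1
      then show ?thesis
        using s Rho code_decodes_Rho_1[OF q2] by (simp add: demands_Rho del: One_nat_def)
    next
      case 2
      then show ?thesis using s Rho code_decodes_Rho_mid[OF q2] by (simp add: demands_Rho)
    next
      case 3
      then show ?thesis using s Rho code_decodes_Rho_last[OF q2] by (simp add: demands_Rho)
    next
      case 4
      then show ?thesis using s Rho code_decodes_Rho_a[OF q2 char] by (simp add: demands_Rho)
    qed
  next
    case (Tn j)
    then obtain k1 k2 k3 where "k1 < 3" "k2 < 3" "k3 < 3" "j = 9*k1 + 3*k2 + k3 + 1"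
      using s demands_Tn_nonempty by blast
    then show ?thesis using s Tn code_decodes_Tn by blast
  qed (use s in \<open>auto simp: N2_def N2_demands_def\<close>)
qed

theorem lemma9:
  fixes q' :: nat
  assumes "q' \<ge> 2"
  shows "(\<exists>(A :: node \<times> node \<Rightarrow> 'a::{finite,field}^2^2) K B. is_vlnc_solution (N2 q') A K B)
         \<longleftrightarrow> CHAR('a) dvd q'"
proof
  assume "\<exists>(A :: node \<times> node \<Rightarrow> 'a::{finite,field}^2^2) K B. is_vlnc_solution (N2 q') A K B"
  then obtain A :: "node \<times> node \<Rightarrow> 'a^2^2" and K B where sol: "is_vlnc_solution (N2 q') A K B"
    by blast
  show "CHAR('a) dvd q'"
  proof (rule ccontr)
    assume "\<not> CHAR('a) dvd q'"
    then have "of_nat q' \<noteq> (0::'a)" by (simp add: of_nat_eq_0_iff_char_dvd)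
    then have "e_transfer q' A K 1 SX = 0" by (rule e_transfer_1_x_zero[OF assms _ sol])
    then show False by (rule no_solution_with_e1_blind_to_x[OF sol])
  qed
next
  assume "CHAR('a) dvd q'"
  then have "of_nat q' = (0::'a)" by (simp add: of_nat_eq_0_iff_char_dvd)
  then have "is_vlnc_solution (N2 q') (\<lambda>_. mat 1 :: 'a^2^2) code_K (code_B q')"
    by (rule code_is_vlnc_solution[OF assms])
  then show "\<exists>(A :: node \<times> node \<Rightarrow> 'a::{finite,field}^2^2) K B. is_vlnc_solution (N2 q') A K B"
    by blast
qed

end
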